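(* Let $l\ge1$, $\vec n=(n_l,\dots,n_0)$ with all $n_i\ge1$, $\mu>0$, $1\le p<\infty$, $0<q\le\infty$, and let $\mathcal C^{l,\vec n}_{\mu_{p,q}\le\mu}=\{\vec C_l\in\mathcal C^{l,\vec n}:\mu_{p,q}(\vec C_l)\le\mu\}$. Then for every sample $S=(\vec x_1,\dots,\vec x_m)$: (1) if $1\le p\le2$, $R_S(\mathcal F\circ\mathcal C^{l,\vec n}_{\mu_{p,q}\le\mu})\le\mu\,4^{(\sum_{i=1}^ln_i)\max\{1/p^*,1/q\}}\frac{\sqrt{\min\{p^*,8n_0\}}}{\sqrt m}K_p(S,H)$; (2) if $2<p<\infty$, $R_S(\mathcal F\circ\mathcal C^{l,\vec n}_{\mu_{p,q}\le\mu})\le\mu\,4^{(\sum_{i=1}^ln_i)\max\{1/p^*,1/q\}}\frac{\sqrt{p^*}}{m^{1/p}}K_p(S,H)$.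
   Context: Pauli notation $P_{\vec z}$ as tensor products of $P_0=\mathbb I,P_1=X,P_2=Y,P_3=Z$. Representation matrix of a linear map $\Phi$ from $a$ to $b$ qubits: $M^\Phi_{\vec z\vec x}=2^{-b}\mathrm{Tr}(P_{\vec z}\Phi(P_{\vec x}))$. Group norm: $\|M\|_{p,q}=(\frac1{N_1}\sum_i\|M_i\|_p^q)^{1/q}$ for an $N_1\times N_2$ matrix with rows $M_i$ ($\max_i\|M_i\|_p$ if $q=\infty$). $p^*$ is the Hölder conjugate. $\mathcal C^{l,\vec n}$ is the set of depth-$l$ circuits $\vec C_l=(\Phi_l,\dots,\Phi_1)$ with $\Phi_i$ a quantum channel from $n_{i-1}$ to $n_i$ qubits, implementing $C_l=\Phi_l\circ\cdots\circ\Phi_1$. $\mu_{p,q}(\vec C_l)=\prod_{i=1}^l\|M^{\Phi_i}\|_{p,q}$. Setup: data encoded as $n_0$-qubit pure states $\rho(\vec x)$, $H$ Hermitian on $n_l$ qubits, $f_{\vec C_l}(\vec x)=\mathrm{Tr}(C_l(\rho(\vec x))H)$; $R_S(\mathcal G)=\mathbb E_{\vec\epsilon}\frac1m\sup_{g\in\mathcal G}|\sum_i\epsilon_ig(\vec x_i)|$ with i.i.d. uniform signs. $\vec\alpha\in\mathbb R^{4^{n_l}}$ has entries $\mathrm{Tr}(P_{\vec z}H)$, $\vec f_I(\vec x)\in\mathbb R^{4^{n_0}}$ has entries $2^{-n_0}\mathrm{Tr}(P_{\vec z}\rho(\vec x))$, $K_p(S,H)=\|\vec\alpha\|_p\max_i\|\vec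 f_I(\vec x_i)\|_{p^*}$. *)

theory Defs
  imports "HOL-Analysis.Analysis" "Jordan_Normal_Form.Matrix"
begin

definition mtrace :: "complex mat \<Rightarrow> complex" where
  "mtrace A = (\<Sum>i<dim_row A. A $$ (i,i))"

definition kron :: "complex mat \<Rightarrow> complex mat \<Rightarrow> complex mat" where
  "kron A B = mat (dim_row A * dim_row B) (dim_col A * dim_col B)
     (\<lambda>(i,j). A $$ (i div dim_row B, j div dim_col B) * B $$ (i mod dim_row B, j mod dim_col B))"

definition hermitian :: "nat \<Rightarrow> complex mat \<Rightarrow> bool" where
  "hermitian d A \<longleftrightarrow> A \<in> carrier_mat d d \<and> (\<forall>i<d. \<forall>j<d. A $$ (i,j) = cnj (A $$ (j,i)))"

definition psd :: "nat \<Rightarrow> complex mat \<Rightarrow> bool" where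
  "psd d A \<longleftrightarrow> hermitian d A \<and>
     (\<forall>v \<in> carrier_vec d. 0 \<le> Re (\<Sum>i<d. \<Sum>j<d. cnj (v $ i) * A $$ (i,j) * v $ j))"

definition pure_state :: "nat \<Rightarrow> complex mat \<Rightarrow> bool" where
  "pure_state n \<rho> \<longleftrightarrow> (\<exists>v \<in> carrier_vec (2^n). (\<Sum>i<2^n. (cmod (v $ i))\<^sup>2) = 1 \<and>
     \<rho> = mat (2^n) (2^n) (\<lambda>(i,j). v $ i * cnj (v $ j)))"

definition pauli :: "nat \<Rightarrow> complex mat" where
  "pauli k = (if k = 0 then mat_of_rows_list 2 [[1,0],[0,1]]
     else if k = 1 then mat_of_rows_list 2 [[0,1],[1,0]]
     else if k = 2 then mat_of_rows_list 2 [[0,-\<i>],[\<i>,0]]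
     else mat_of_rows_list 2 [[1,0],[0,-1]])"

text \<open>Pauli string on n qubits indexed by z < 4^n (base-4 digits of z)\<close>
fun pauli_string :: "nat \<Rightarrow> nat \<Rightarrow> complex mat" where
  "pauli_string 0 z = 1\<^sub>m 1"
| "pauli_string (Suc n) z = kron (pauli (z mod 4)) (pauli_string n (z div 4))"

text \<open>(id_k \<otimes> Phi) applied to a (k*2^a)-dimensional matrix, blockwise\<close>
definition ext_id :: "nat \<Rightarrow> nat \<Rightarrow> nat \<Rightarrow> (complex mat \<Rightarrow> complex mat) \<Rightarrow> complex mat \<Rightarrow> complex mat" where
  "ext_id k a b \<Phi> X = mat (k * 2^b) (k * 2^b) (\<lambda>(r,c).
      \<Phi> (mat (2^a) (2^a) (\<lambda>(r',c'). X $$ ((r div 2^b) * 2^a + r', (c div 2^b) * 2^a + c')))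
        $$ (r mod 2^b, c mod 2^b))"

definition quantum_channel :: "nat \<Rightarrow> nat \<Rightarrow> (complex mat \<Rightarrow> complex mat) \<Rightarrow> bool" where
  "quantum_channel a b \<Phi> \<longleftrightarrow>
     (\<forall>A \<in> carrier_mat (2^a) (2^a). \<Phi> A \<in> carrier_mat (2^b) (2^b)) \<and>
     (\<forall>A \<in> carrier_mat (2^a) (2^a). \<forall>B \<in> carrier_mat (2^a) (2^a). \<Phi> (A + B) = \<Phi> A + \<Phi> B) \<and>
     (\<forall>A \<in> carrier_mat (2^a) (2^a). \<forall>c. \<Phi> (c \<cdot>\<^sub>m A) = c \<cdot>\<^sub>m \<Phi> A) \<and>
     (\<forall>A \<in> carrier_mat (2^a) (2^a). mtrace (\<Phi> A) = mtrace A) \<and>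
     (\<forall>k. \<forall>X. psd (k * 2^a) X \<longrightarrow> psd (k * 2^b) (ext_id k a b \<Phi> X))"

definition rep_mat :: "nat \<Rightarrow> nat \<Rightarrow> (complex mat \<Rightarrow> complex mat) \<Rightarrow> complex mat" where
  "rep_mat a b \<Phi> = mat (4^b) (4^a) (\<lambda>(z,x). mtrace (pauli_string b z * \<Phi> (pauli_string a x)) / 2^b)"

definition lnorm :: "nat \<Rightarrow> (nat \<Rightarrow> complex) \<Rightarrow> ereal \<Rightarrow> real" where
  "lnorm n v r = (if r = \<infinity> then Max ((\<lambda>i. cmod (v i)) ` {..<n})
                  else (\<Sum>i<n. cmod (v i) powr real_of_ereal r) powr (1 / real_of_ereal r))"

definition group_norm :: "complex mat \<Rightarrow> real \<Rightarrow> ereal \<Rightarrow> real" where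
  "group_norm M p q =
     (let rn = (\<lambda>i. lnorm (dim_col M) (\<lambda>j. M $$ (i,j)) (ereal p)) in
      if q = \<infinity> then Max (rn ` {..<dim_row M})
      else ((1 / real (dim_row M)) * (\<Sum>i<dim_row M. rn i powr real_of_ereal q)) powr (1 / real_of_ereal q))"

definition hconj :: "real \<Rightarrow> ereal" where
  "hconj p = (if p = 1 then \<infinity> else ereal (p / (p - 1)))"

definition ereal_recip :: "ereal \<Rightarrow> real" where
  "ereal_recip q = (if q = \<infinity> then 0 else 1 / real_of_ereal q)"

text \<open>ns = [n_0, ..., n_l]; Cs = [Phi_1, ..., Phi_l], Phi_i a channel from n_{i-1} to n_i qubits\<close>
definition circuits :: "nat \<Rightarrow> nat list \<Rightarrow> (complex mat \<Rightarrow> complex mat) list set" where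
  "circuits l ns = {Cs. length Cs = l \<and>
      (\<forall>i<l. quantum_channel (ns ! i) (ns ! Suc i) (Cs ! i))}"

text \<open>C_l = Phi_l o ... o Phi_1\<close>
definition circuit_map :: "(complex mat \<Rightarrow> complex mat) list \<Rightarrow> complex mat \<Rightarrow> complex mat" where
  "circuit_map Cs = fold (\<lambda>\<Phi> acc. \<Phi> \<circ> acc) Cs id"

definition mu_pq :: "real \<Rightarrow> ereal \<Rightarrow> nat list \<Rightarrow> (complex mat \<Rightarrow> complex mat) list \<Rightarrow> real" where
  "mu_pq p q ns Cs = (\<Prod>i<length Cs. group_norm (rep_mat (ns ! i) (ns ! Suc i) (Cs ! i)) p q)"

definition model_fun :: "('x \<Rightarrow> complex mat) \<Rightarrow> complex mat \<Rightarrow> (complex mat \<Rightarrow> complex mat) list \<Rightarrow> 'x \<Rightarrow> real" where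
  "model_fun \<rho> H Cs x = Re (mtrace (circuit_map Cs (\<rho> x) * H))"

text \<open>expectation over uniform sign vectors; sup of the absolute values
  (taken as 0 for an empty class, the natural convention since the values are \<ge> 0)\<close>
definition rademacher :: "'x list \<Rightarrow> ('x \<Rightarrow> real) set \<Rightarrow> real" where
  "rademacher xs G =
    (let m = length xs; E = {es :: real list. length es = m \<and> set es \<subseteq> {-1, 1}} in
     (1 / real (card E)) * (\<Sum>es\<in>E. (1 / real m) *
        Sup (insert 0 {\<bar>\<Sum>i<m. es ! i * g (xs ! i)\<bar> | g. g \<in> G})))"

definition alpha_vec :: "nat \<Rightarrow> complex mat \<Rightarrow> nat \<Rightarrow> complex" where
  "alpha_vec nl H z = mtrace (pauli_string nl z * H)"

definition fI_vec :: "nat \<Rightarrow> complex mat \<Rightarrow> nat \<Rightarrow> complex" where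
  "fI_vec n0 \<rho> z = mtrace (pauli_string n0 z * \<rho>) / 2^n0"

definition K_p :: "real \<Rightarrow> nat \<Rightarrow> nat \<Rightarrow> ('x \<Rightarrow> complex mat) \<Rightarrow> 'x list \<Rightarrow> complex mat \<Rightarrow> real" where
  "K_p p n0 nl \<rho> xs H = lnorm (4^nl) (alpha_vec nl H) (ereal p) *
      Max ((\<lambda>x. lnorm (4^n0) (fI_vec n0 (\<rho> x)) (hconj p)) ` set xs)"

end

(* Write p' = p/(p-1) for the Hoelder conjugate.  Expanding the input state and the observable
   in the Pauli basis, a circuit acts on the coefficient vector f_I(x) of the input through the
   product of the representation matrices of its layers, and the model output is the pairing of
   the result with the coefficient vector alpha of H.  For a fixed sign vector, Hoelder's
   inequality at the output and, layer by layer, Hoelder's inequality row by row followed by a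
   comparison of the l_p' norm of the row norms with the group norm (which costs the factor
   4^(n_i max(1/p', 1/q))) bound the signed sum of outputs by mu 4^(...) ||alpha||_p times the
   l_p' norm of the sign-weighted sum of the input vectors.  The average of that norm over the
   signs is estimated by Khintchine's inequality, proved from the even moments (2k-1)!!, together
   with mixed-norm inequalities: relative to max_i ||f_I(x_i)||_p' it is at most sqrt(p' m) for
   p' >= 2, at most sqrt(8 n_0 m) when p' is large compared with the dimension 4^n_0, and at
   most m^(1/p') for p' <= 2. *)

theory Submission
  imports Defs
begin

section \<open>Pauli strings\<close>

lemma pauli_dims [simp]: "dim_row (pauli k) = 2" "dim_col (pauli k) = 2"
  by (simp_all add: pauli_def mat_of_rows_list_def)

lemma pauli_entry:
  assumes "i < 2" "j < 2"
  shows "pauli k $$ (i,j) =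
    (if k = 0 then (if i = j then 1 else 0)
     else if k = 1 then (if i = j then 0 else 1)
     else if k = 2 then (if i = j then 0 else if i = 0 then -\<i> else \<i>)
     else (if i = j then (if i = 0 then 1 else -1) else 0))"
  using assms by (auto simp: pauli_def mat_of_rows_list_def less_2_cases_iff)

lemma sum_pauli_entry_products:
  assumes "r < 2" "s < 2" "r' < 2" "s' < 2"
  shows "(\<Sum>a<4. pauli a $$ (r',s') * pauli a $$ (r,s)) = (if r = s' \<and> s = r' then 2 else 0)"
  using assms by (auto simp: pauli_entry less_2_cases_iff numeral_eq_Suc lessThan_Suc)

lemma cnj_pauli_entry: "i < 2 \<Longrightarrow> j < 2 \<Longrightarrow> cnj (pauli k $$ (i,j)) = pauli k $$ (j,i)"
  by (auto simp: pauli_entry less_2_cases_iff)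

lemma kron_dims [simp]:
  "dim_row (kron A B) = dim_row A * dim_row B" "dim_col (kron A B) = dim_col A * dim_col B"
  by (simp_all add: kron_def)

lemma pauli_string_dims [simp]:
  "dim_row (pauli_string n z) = 2^n" "dim_col (pauli_string n z) = 2^n"
  by (induction n arbitrary: z) simp_all

lemma pauli_string_carrier [simp]: "pauli_string n z \<in> carrier_mat (2^n) (2^n)"
  by (rule carrier_matI) simp_all

lemma pauli_string_Suc_entry:
  assumes "i < 2 * 2^n" "j < 2 * 2^n"
  shows "pauli_string (Suc n) z $$ (i,j) =
    pauli (z mod 4) $$ (i div 2^n, j div 2^n) * pauli_string n (z div 4) $$ (i mod 2^n, j mod 2^n)"
  using assms by (simp add: kron_def)

declare pauli_string.simps(2) [simp del]

lemma cnj_pauli_string_entry: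
  "i < 2^n \<Longrightarrow> j < 2^n \<Longrightarrow> cnj (pauli_string n z $$ (i,j)) = pauli_string n z $$ (j,i)"
proof (induction n arbitrary: z i j)
  case 0
  then show ?case by simp
next
  case (Suc n)
  have "i div 2^n < 2" "j div 2^n < 2"
    using Suc.prems by (auto simp: less_mult_imp_div_less)
  moreover have "i < 2*2^n" "j < 2*2^n"
    using Suc.prems by auto
  ultimately show ?case
    by (simp only: pauli_string_Suc_entry Suc.IH mod_less_divisor zero_less_power
        zero_less_numeral complex_cnj_mult cnj_pauli_entry)
qed

lemma sum_lessThan_mult:
  fixes g :: "nat \<Rightarrow> 'a::comm_monoid_add"
  shows "(\<Sum>I<k*D. g I) = (\<Sum>r<k. \<Sum>i<D. g (r*D + i))"
proof -
  have "(\<Sum>I<k*D. g I) = (\<Sum>r<k. sum g {r*D..<r*D+D})"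
    using sum.nat_group[where g=g and k=D and n=k] by simp
  also have "\<dots> = (\<Sum>r<k. \<Sum>i<D. g (r*D + i))"
  proof (rule sum.cong[OF refl])
    fix r
    have "sum g {r*D..<r*D+D} = sum g {0+r*D..<D+r*D}"
      by (simp add: add.commute)
    also have "\<dots> = (\<Sum>i=0..<D. g (i + r*D))"
      by (rule sum.shift_bounds_nat_ivl)
    finally show "sum g {r*D..<r*D+D} = (\<Sum>i<D. g (r*D + i))"
      by (simp add: atLeast0LessThan add.commute)
  qed
  finally show ?thesis .
qed

lemma mtrace_mult:
  "A \<in> carrier_mat d d \<Longrightarrow> B \<in> carrier_mat d d \<Longrightarrow>
   mtrace (A * B) = (\<Sum>i<d. \<Sum>j<d. A $$ (i,j) * B $$ (j,i))"
  unfolding mtrace_def by (auto simp: scalar_prod_def atLeast0LessThan intro!: sum.cong)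

definition quadrant :: "nat \<Rightarrow> complex mat \<Rightarrow> nat \<Rightarrow> nat \<Rightarrow> complex mat" where
  "quadrant D A s r = mat D D (\<lambda>(i,j). A $$ (s*D + i, r*D + j))"

lemma quadrant_carrier [simp]: "quadrant D A s r \<in> carrier_mat D D"
  by (simp add: quadrant_def)

lemma mtrace_pauli_string_Suc:
  assumes A: "A \<in> carrier_mat (2*2^n) (2*2^n)" and a: "a < 4"
  shows "mtrace (pauli_string (Suc n) (a + b*4) * A) =
    (\<Sum>r<2. \<Sum>s<2. pauli a $$ (r,s) * mtrace (pauli_string n b * quadrant (2^n) A s r))"
proof -
  let ?D = "2^n :: nat" and ?P = "pauli_string (Suc n) (a + b*4)"
  have ab: "(a + b*4) mod 4 = a" "(a + b*4) div 4 = b"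
    using a by auto
  have "mtrace (?P * A) = (\<Sum>I<2*?D. \<Sum>J<2*?D. ?P $$ (I,J) * A $$ (J,I))"
    using A by (intro mtrace_mult) auto
  also have "\<dots> = (\<Sum>r<2. \<Sum>i<?D. \<Sum>s<2. \<Sum>j<?D. ?P $$ (r*?D+i, s*?D+j) * A $$ (s*?D+j, r*?D+i))"
    by (simp add: sum_lessThan_mult)
  also have "\<dots> = (\<Sum>r<2. \<Sum>i<?D. \<Sum>s<2. \<Sum>j<?D.
      pauli a $$ (r,s) * (pauli_string n b $$ (i,j) * quadrant ?D A s r $$ (j,i)))"
  proof (intro sum.cong refl)
    fix r i s j :: nat
    assume "r \<in> {..<2}" "i \<in> {..<?D}" "s \<in> {..<2}" "j \<in> {..<?D}"
    then have "r*?D+i < 2*2^n" "s*?D+j < 2*2^n"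
      and "(r*?D+i) div 2^n = r" "(r*?D+i) mod 2^n = i" "(s*?D+j) div 2^n = s" "(s*?D+j) mod 2^n = j"
      by (auto simp: less_2_cases_iff)
    then show "?P $$ (r*?D+i, s*?D+j) * A $$ (s*?D+j, r*?D+i) =
        pauli a $$ (r,s) * (pauli_string n b $$ (i,j) * quadrant ?D A s r $$ (j,i))"
      using \<open>i \<in> _\<close> \<open>j \<in> _\<close> by (simp add: pauli_string_Suc_entry ab a quadrant_def)
  qed
  also have "\<dots> = (\<Sum>r<2. \<Sum>s<2. pauli a $$ (r,s) *
      (\<Sum>i<?D. \<Sum>j<?D. pauli_string n b $$ (i,j) * quadrant ?D A s r $$ (j,i)))"
    by (rule sum.cong[OF refl], subst sum.swap, simp add: sum_distrib_left)
  also have "\<dots> = (\<Sum>r<2. \<Sum>s<2. pauli a $$ (r,s) * mtrace (pauli_string n b * quadrant ?D A s r))"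
    by (simp add: mtrace_mult[OF pauli_string_carrier quadrant_carrier])
  finally show ?thesis .
qed

text \<open>Completeness of the single-qubit Pauli matrices picks out the quadrant containing \<open>(i,j)\<close>.\<close>

lemma sum_pauli_string_Suc_first_qubit:
  assumes A: "A \<in> carrier_mat (2*2^n) (2*2^n)" and ij: "i < 2*2^n" "j < 2*2^n"
  shows "(\<Sum>a<4. mtrace (pauli_string (Suc n) (a + b*4) * A) / 2^Suc n * pauli_string (Suc n) (a + b*4) $$ (i,j))
    = mtrace (pauli_string n b * quadrant (2^n) A (i div 2^n) (j div 2^n)) / 2^n
      * pauli_string n b $$ (i mod 2^n, j mod 2^n)"
proof -
  let ?I = "i div 2^n" and ?J = "j div 2^n"
  let ?T = "\<lambda>s r. mtrace (pauli_string n b * quadrant (2^n) A s r)"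
  let ?c = "pauli_string n b $$ (i mod 2^n, j mod 2^n) / 2^Suc n"
  have IJ: "?I < 2" "?J < 2"
    using ij by (auto simp: less_mult_imp_div_less)
  have "(\<Sum>a<4. mtrace (pauli_string (Suc n) (a + b*4) * A) / 2^Suc n * pauli_string (Suc n) (a + b*4) $$ (i,j))
      = (\<Sum>a<4. \<Sum>r<2. \<Sum>s<2. ?T s r * ?c * (pauli a $$ (r,s) * pauli a $$ (?I,?J)))"
  proof (intro sum.cong refl)
    fix a :: nat
    assume "a \<in> {..<4}"
    then have "(a + b*4) mod 4 = a" "(a + b*4) div 4 = b" "a < 4"
      by auto
    then show "mtrace (pauli_string (Suc n) (a + b*4) * A) / 2^Suc n * pauli_string (Suc n) (a + b*4) $$ (i,j)
        = (\<Sum>r<2. \<Sum>s<2. ?T s r * ?c * (pauli a $$ (r,s) * pauli a $$ (?I,?J)))"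
      using mtrace_pauli_string_Suc[OF A \<open>a < 4\<close>, of b] ij
      by (simp add: pauli_string_Suc_entry sum_distrib_left sum_divide_distrib mult_ac)
  qed
  also have "\<dots> = (\<Sum>r<2. \<Sum>s<2. ?T s r * ?c * (\<Sum>a<4. pauli a $$ (r,s) * pauli a $$ (?I,?J)))"
    by (simp add: sum_distrib_left sum.swap[of _ "{..<4::nat}"])
  also have "\<dots> = (\<Sum>r<2. \<Sum>s<2. if s = ?I then if r = ?J then 2 * ?T s r * ?c else 0 else 0)"
    using IJ by (intro sum.cong refl) (auto simp: sum_pauli_entry_products)
  also have "\<dots> = 2 * ?T ?I ?J * ?c"
    using IJ by (simp only: sum.delta finite_lessThan lessThan_iff if_True)
  finally show ?thesis
    by simp
qed

lemma pauli_expansion_entry: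
  assumes "A \<in> carrier_mat (2^n) (2^n)" "i < 2^n" "j < 2^n"
  shows "A $$ (i,j) = (\<Sum>x<4^n. mtrace (pauli_string n x * A) / 2^n * pauli_string n x $$ (i,j))"
  using assms
proof (induction n arbitrary: A i j)
  case 0
  then show ?case by (simp add: mtrace_def)
next
  case (Suc n)
  let ?Q = "quadrant (2^n) A (i div 2^n) (j div 2^n)"
  have A: "A \<in> carrier_mat (2*2^n) (2*2^n)" and ij: "i < 2*2^n" "j < 2*2^n"
    using Suc.prems by auto
  have "(\<Sum>x<4^Suc n. mtrace (pauli_string (Suc n) x * A) / 2^Suc n * pauli_string (Suc n) x $$ (i,j))
     = (\<Sum>b<4^n. \<Sum>a<4. mtrace (pauli_string (Suc n) (a + b*4) * A) / 2^Suc n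
          * pauli_string (Suc n) (a + b*4) $$ (i,j))"
    using sum_lessThan_mult[of "\<lambda>x. mtrace (pauli_string (Suc n) x * A) / 2^Suc n
      * pauli_string (Suc n) x $$ (i,j)" "4^n" 4]
    by (simp add: mult.commute add.commute)
  also have "\<dots> = (\<Sum>b<4^n. mtrace (pauli_string n b * ?Q) / 2^n * pauli_string n b $$ (i mod 2^n, j mod 2^n))"
    by (simp only: sum_pauli_string_Suc_first_qubit[OF A ij])
  also have "\<dots> = ?Q $$ (i mod 2^n, j mod 2^n)"
    using Suc.IH[of ?Q] by simp
  also have "\<dots> = A $$ (i,j)"
    using ij by (simp add: quadrant_def less_mult_imp_div_less div_mult_mod_eq)
  finally show ?case
    by (rule sym)
qed

section \<open>Pauli expansions and linear maps\<close>

fun mat_sum :: "nat \<Rightarrow> (nat \<Rightarrow> complex mat) \<Rightarrow> nat \<Rightarrow> complex mat" where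
  "mat_sum d f 0 = 0\<^sub>m d d"
| "mat_sum d f (Suc k) = mat_sum d f k + f k"

lemma mat_sum_carrier:
  "(\<And>k. k < K \<Longrightarrow> f k \<in> carrier_mat d d) \<Longrightarrow> mat_sum d f K \<in> carrier_mat d d"
  by (induction K) auto

lemma mat_sum_entry:
  assumes "\<And>k. k < K \<Longrightarrow> f k \<in> carrier_mat d d" "i < d" "j < d"
  shows "mat_sum d f K $$ (i,j) = (\<Sum>k<K. f k $$ (i,j))"
  using assms(1)
proof (induction K)
  case 0
  then show ?case using assms(2,3) by simp
next
  case (Suc K)
  then have "dim_row (f K) = d" "dim_col (f K) = d" "mat_sum d f K \<in> carrier_mat d d"
    by (auto intro: mat_sum_carrier)
  then show ?case using Suc assms(2,3) by simp
qed

definition pauli_expand :: "nat \<Rightarrow> (nat \<Rightarrow> complex) \<Rightarrow> complex mat" where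
  "pauli_expand n u = mat (2^n) (2^n) (\<lambda>(i,j). \<Sum>x<4^n. u x * pauli_string n x $$ (i,j))"

lemma pauli_expand_dims [simp]:
  "dim_row (pauli_expand n u) = 2^n" "dim_col (pauli_expand n u) = 2^n"
  by (simp_all add: pauli_expand_def)

lemma pauli_expand_carrier [simp]: "pauli_expand n u \<in> carrier_mat (2^n) (2^n)"
  by (simp add: carrier_matI)

lemma pauli_expand_eq_mat_sum:
  "pauli_expand n u = mat_sum (2^n) (\<lambda>x. u x \<cdot>\<^sub>m pauli_string n x) (4^n)"
proof -
  have carrier: "mat_sum (2^n) (\<lambda>x. u x \<cdot>\<^sub>m pauli_string n x) (4^n) \<in> carrier_mat (2^n) (2^n)"
    by (rule mat_sum_carrier) simp
  show ?thesis
    by (rule eq_matI) (use carrier in \<open>auto simp: pauli_expand_def mat_sum_entry\<close>)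
qed

lemma pauli_expand_coeffs:
  assumes "A \<in> carrier_mat (2^n) (2^n)"
  shows "A = pauli_expand n (\<lambda>x. mtrace (pauli_string n x * A) / 2^n)"
  by (rule eq_matI) (use assms in \<open>auto simp: pauli_expand_def pauli_expansion_entry\<close>)

lemma quantum_channel_carrier:
  "quantum_channel a b \<Phi> \<Longrightarrow> A \<in> carrier_mat (2^a) (2^a) \<Longrightarrow> \<Phi> A \<in> carrier_mat (2^b) (2^b)"
  unfolding quantum_channel_def by blast

lemma quantum_channel_smult:
  "quantum_channel a b \<Phi> \<Longrightarrow> A \<in> carrier_mat (2^a) (2^a) \<Longrightarrow> \<Phi> (c \<cdot>\<^sub>m A) = c \<cdot>\<^sub>m \<Phi> A"
  unfolding quantum_channel_def by blast

lemma quantum_channel_zero: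
  assumes "quantum_channel a b \<Phi>"
  shows "\<Phi> (0\<^sub>m (2^a) (2^a)) = 0\<^sub>m (2^b) (2^b)"
proof -
  have "\<Phi> (0\<^sub>m (2^a) (2^a)) = \<Phi> (0 \<cdot>\<^sub>m 0\<^sub>m (2^a) (2^a))"
    by simp
  also have "\<dots> = 0 \<cdot>\<^sub>m \<Phi> (0\<^sub>m (2^a) (2^a))"
    using assms by (intro quantum_channel_smult) auto
  also have "\<dots> = 0\<^sub>m (2^b) (2^b)"
    using quantum_channel_carrier[OF assms zero_carrier_mat] by auto
  finally show ?thesis .
qed

lemma quantum_channel_mat_sum:
  assumes "quantum_channel a b \<Phi>" "\<And>k. k < K \<Longrightarrow> f k \<in> carrier_mat (2^a) (2^a)"
  shows "\<Phi> (mat_sum (2^a) f K) = mat_sum (2^b) (\<lambda>k. \<Phi> (f k)) K"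
  using assms(2)
proof (induction K)
  case 0
  then show ?case using quantum_channel_zero[OF assms(1)] by simp
next
  case (Suc K)
  then have "mat_sum (2^a) f K \<in> carrier_mat (2^a) (2^a)" "f K \<in> carrier_mat (2^a) (2^a)"
    by (auto intro: mat_sum_carrier)
  then show ?case
    using Suc assms(1) unfolding quantum_channel_def by simp
qed

lemma quantum_channel_pauli_expand:
  assumes qc: "quantum_channel a b \<Phi>"
  shows "\<Phi> (pauli_expand a u) = pauli_expand b (\<lambda>z. \<Sum>x<4^a. rep_mat a b \<Phi> $$ (z,x) * u x)"
proof (rule eq_matI)
  have images: "\<Phi> (pauli_string a x) \<in> carrier_mat (2^b) (2^b)" for x
    by (rule quantum_channel_carrier[OF qc pauli_string_carrier])
  then have image_dims: "dim_row (\<Phi> (pauli_string a x)) = 2^b" "dim_col (\<Phi> (pauli_string a x)) = 2^b" for x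
    by auto
  have "\<Phi> (pauli_expand a u) = mat_sum (2^b) (\<lambda>x. \<Phi> (u x \<cdot>\<^sub>m pauli_string a x)) (4^a)"
    unfolding pauli_expand_eq_mat_sum by (rule quantum_channel_mat_sum[OF qc]) simp
  also have "\<dots> = mat_sum (2^b) (\<lambda>x. u x \<cdot>\<^sub>m \<Phi> (pauli_string a x)) (4^a)"
    by (simp add: quantum_channel_smult[OF qc])
  finally have expand: "\<Phi> (pauli_expand a u) = \<dots>" .
  fix i j
  assume "i < dim_row (pauli_expand b (\<lambda>z. \<Sum>x<4^a. rep_mat a b \<Phi> $$ (z,x) * u x))"
    "j < dim_col (pauli_expand b (\<lambda>z. \<Sum>x<4^a. rep_mat a b \<Phi> $$ (z,x) * u x))"
  then have ij: "i < 2^b" "j < 2^b"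
    by (auto simp: pauli_expand_def)
  have "\<Phi> (pauli_expand a u) $$ (i,j) = (\<Sum>x<4^a. u x * \<Phi> (pauli_string a x) $$ (i,j))"
    unfolding expand using images image_dims ij by (simp add: mat_sum_entry)
  also have "\<dots> = (\<Sum>x<4^a. u x * (\<Sum>z<4^b. rep_mat a b \<Phi> $$ (z,x) * pauli_string b z $$ (i,j)))"
    using images ij by (intro sum.cong refl) (simp add: pauli_expansion_entry[of _ b] rep_mat_def)
  also have "\<dots> = (\<Sum>z<4^b. (\<Sum>x<4^a. rep_mat a b \<Phi> $$ (z,x) * u x) * pauli_string b z $$ (i,j))"
    by (simp add: sum_distrib_left sum_distrib_right mult_ac sum.swap[of _ "{..<4^b}"])
  finally show "\<Phi> (pauli_expand a u) $$ (i,j) =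
      pauli_expand b (\<lambda>z. \<Sum>x<4^a. rep_mat a b \<Phi> $$ (z,x) * u x) $$ (i,j)"
    using ij by (simp add: pauli_expand_def)
qed (use quantum_channel_carrier[OF qc pauli_expand_carrier] in auto)

section \<open>Circuits in the Pauli basis\<close>

fun circuit_coeffs ::
  "(complex mat \<Rightarrow> complex mat) list \<Rightarrow> nat list \<Rightarrow> nat \<Rightarrow> (nat \<Rightarrow> complex) \<Rightarrow> nat \<Rightarrow> complex" where
  "circuit_coeffs Cs ns 0 u = u"
| "circuit_coeffs Cs ns (Suc t) u =
    (\<lambda>z. \<Sum>x<4^(ns!t). rep_mat (ns!t) (ns!Suc t) (Cs!t) $$ (z,x) * circuit_coeffs Cs ns t u x)"

lemma circuit_map_take_Suc:
  "t < length Cs \<Longrightarrow> circuit_map (take (Suc t) Cs) = (Cs ! t) \<circ> circuit_map (take t Cs)"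
  by (simp add: circuit_map_def take_Suc_conv_app_nth)

lemma circuit_map_pauli_expand:
  assumes "Cs \<in> circuits l ns" "t \<le> l"
  shows "circuit_map (take t Cs) (pauli_expand (ns!0) u) = pauli_expand (ns!t) (circuit_coeffs Cs ns t u)"
  using assms(2)
proof (induction t)
  case 0
  then show ?case by (simp add: circuit_map_def)
next
  case (Suc t)
  have "length Cs = l" "quantum_channel (ns!t) (ns!Suc t) (Cs!t)"
    using assms(1) Suc.prems unfolding circuits_def by auto
  then show ?case
    using Suc by (simp add: circuit_map_take_Suc quantum_channel_pauli_expand)
qed

lemma circuit_coeffs_linear:
  "circuit_coeffs Cs ns t (\<lambda>z. \<Sum>i<m. c i * u i z) = (\<lambda>z. \<Sum>i<m. c i * circuit_coeffs Cs ns t (u i) z)"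
proof (induction t)
  case 0
  then show ?case by simp
next
  case (Suc t)
  then show ?case
    by (simp add: sum_distrib_left sum_distrib_right mult_ac sum.swap[of _ _ "{..<m}"])
qed

lemma mtrace_pauli_expand_mult:
  assumes "H \<in> carrier_mat (2^n) (2^n)"
  shows "mtrace (pauli_expand n w * H) = (\<Sum>z<4^n. w z * mtrace (pauli_string n z * H))"
proof -
  have "mtrace (pauli_expand n w * H) = (\<Sum>i<2^n. \<Sum>j<2^n. pauli_expand n w $$ (i,j) * H $$ (j,i))"
    by (rule mtrace_mult[OF pauli_expand_carrier assms])
  also have "\<dots> = (\<Sum>z<4^n. w z * (\<Sum>i<2^n. \<Sum>j<2^n. pauli_string n z $$ (i,j) * H $$ (j,i)))"
    by (simp add: pauli_expand_def sum_distrib_left sum_distrib_right mult_ac sum.swap[of _ "{..<4^n}"])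
  also have "\<dots> = (\<Sum>z<4^n. w z * mtrace (pauli_string n z * H))"
    using mtrace_mult[OF pauli_string_carrier assms] by simp
  finally show ?thesis .
qed

lemma pure_state_carrier: "pure_state n \<rho> \<Longrightarrow> \<rho> \<in> carrier_mat (2^n) (2^n)"
  unfolding pure_state_def by auto

lemma model_fun_eq_coeffs:
  assumes "Cs \<in> circuits l ns" "pure_state (ns!0) (\<rho> x)" "H \<in> carrier_mat (2^(ns!l)) (2^(ns!l))"
  shows "model_fun \<rho> H Cs x =
    Re (\<Sum>z<4^(ns!l). alpha_vec (ns!l) H z * circuit_coeffs Cs ns l (fI_vec (ns!0) (\<rho> x)) z)"
proof -
  have "length Cs = l"
    using assms(1) by (simp add: circuits_def)
  moreover have "\<rho> x = pauli_expand (ns!0) (fI_vec (ns!0) (\<rho> x))"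
    unfolding fI_vec_def by (rule pauli_expand_coeffs[OF pure_state_carrier[OF assms(2)]])
  ultimately have "circuit_map Cs (\<rho> x) = pauli_expand (ns!l) (circuit_coeffs Cs ns l (fI_vec (ns!0) (\<rho> x)))"
    using circuit_map_pauli_expand[OF assms(1) order_refl] by (metis take_all_iff order_refl)
  then show ?thesis
    unfolding model_fun_def using mtrace_pauli_expand_mult[OF assms(3)]
    by (simp add: alpha_vec_def mult_ac)
qed

lemma Im_fI_vec:
  assumes "pure_state n \<rho>"
  shows "Im (fI_vec n \<rho> z) = 0"
proof -
  obtain v where v: "v \<in> carrier_vec (2^n)" "\<rho> = mat (2^n) (2^n) (\<lambda>(i,j). v $ i * cnj (v $ j))"
    using assms unfolding pure_state_def by auto
  then have trace: "mtrace (pauli_string n z * \<rho>) =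
      (\<Sum>i<2^n. \<Sum>j<2^n. pauli_string n z $$ (i,j) * (v $ j * cnj (v $ i)))"
    using mtrace_mult[OF pauli_string_carrier, of \<rho>] by simp
  have "cnj (mtrace (pauli_string n z * \<rho>)) =
      (\<Sum>i<2^n. \<Sum>j<2^n. pauli_string n z $$ (j,i) * (v $ i * cnj (v $ j)))"
    unfolding trace by (simp add: cnj_pauli_string_entry mult_ac)
  also have "\<dots> = mtrace (pauli_string n z * \<rho>)"
    unfolding trace by (rule sum.swap)
  finally have "Im (mtrace (pauli_string n z * \<rho>)) = 0"
    by (metis Reals_cnj_iff complex_is_Real_iff)
  then show ?thesis
    by (simp add: fI_vec_def)
qed

section \<open>Inequalities for finite sums\<close>

lemma Max_image_lessThan_le:
  "(n::nat) > 0 \<Longrightarrow> (\<And>i. i < n \<Longrightarrow> f i \<le> B) \<Longrightarrow> Max (f ` {..<n}) \<le> (B::real)"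
  by (subst Max_le_iff) auto

lemma le_Max_image_lessThan: "i < n \<Longrightarrow> f i \<le> Max (f ` {..<n::nat})"
  by (rule Max_ge) auto

lemma holder_inequality:
  fixes a b :: "'i \<Rightarrow> real"
  assumes I: "finite I" and ab: "\<And>i. i \<in> I \<Longrightarrow> a i \<ge> 0" "\<And>i. i \<in> I \<Longrightarrow> b i \<ge> 0"
    and pq: "p > 1" "q > 1" "1/p + 1/q = 1"
  shows "(\<Sum>i\<in>I. a i * b i) \<le> (\<Sum>i\<in>I. a i powr p) powr (1/p) * (\<Sum>i\<in>I. b i powr q) powr (1/q)"
proof -
  define SA where "SA = (\<Sum>i\<in>I. a i powr p)"
  define SB where "SB = (\<Sum>i\<in>I. b i powr q)"
  have SA0: "SA \<ge> 0" "SB \<ge> 0"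
    unfolding SA_def SB_def by (auto intro: sum_nonneg)
  show ?thesis
  proof (cases "SA = 0 \<or> SB = 0")
    case True
    then have "(\<forall>i\<in>I. a i = 0) \<or> (\<forall>i\<in>I. b i = 0)"
      using ab I pq unfolding SA_def SB_def by (auto simp: sum_nonneg_eq_0_iff)
    then show ?thesis
      using SA0 unfolding SA_def SB_def by auto
  next
    case False
    then have pos: "SA > 0" "SB > 0"
      using SA0 by auto
    define A where "A = SA powr (1/p)"
    define B where "B = SB powr (1/q)"
    have AB: "A > 0" "B > 0"
      using pos by (auto simp: A_def B_def)
    have "(\<Sum>i\<in>I. (a i / A) * (b i / B)) \<le> (\<Sum>i\<in>I. (a i / A) powr p / p + (b i / B) powr q / q)"
      using ab AB pq by (intro sum_mono Youngs_inequality) auto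
    also have "\<dots> = SA / A powr p / p + SB / B powr q / q"
      using ab AB by (simp add: SA_def SB_def sum.distrib powr_divide sum_divide_distrib)
    also have "\<dots> = 1"
      using pos pq by (simp add: A_def B_def powr_powr)
    finally have "(\<Sum>i\<in>I. a i * b i) / (A * B) \<le> 1"
      by (simp add: sum_divide_distrib mult_ac)
    then show ?thesis
      using AB by (simp add: divide_le_eq A_def B_def SA_def SB_def)
  qed
qed

lemma powr_mean_le_mean_powr:
  fixes y :: "'i \<Rightarrow> real"
  assumes I: "finite I" "I \<noteq> {}" and y: "\<And>i. i \<in> I \<Longrightarrow> y i \<ge> 0" and p: "p \<ge> 1"
  shows "((\<Sum>i\<in>I. y i) / card I) powr p \<le> (\<Sum>i\<in>I. y i powr p) / card I"
proof (cases "p = 1")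
  case True
  then show ?thesis using y by (simp add: sum_nonneg)
next
  case False
  then have p1: "p > 1" using p by simp
  define q where "q = p / (p - 1)"
  have q: "q > 1" "1/q + 1/p = 1"
    using p1 by (auto simp: q_def field_simps)
  define w where "w = 1 / real (card I)"
  have w: "w > 0"
    using I by (simp add: w_def card_gt_0_iff)
  txt \<open>Hoelder with the constant weights \<open>w powr (1/q)\<close> and \<open>w powr (1/p) * y i\<close>.\<close>
  have "(\<Sum>i\<in>I. y i) / card I = (\<Sum>i\<in>I. w powr (1/q) * (w powr (1/p) * y i))"
    using w q by (simp add: w_def sum_divide_distrib mult.assoc[symmetric] powr_add[symmetric])
  also have "\<dots> \<le> (\<Sum>i\<in>I. (w powr (1/q)) powr q) powr (1/q) * (\<Sum>i\<in>I. (w powr (1/p) * y i) powr p) powr (1/p)"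
    using y q p1 w by (intro holder_inequality[OF I(1)]) auto
  also have "(\<Sum>i\<in>I. (w powr (1/q)) powr q) = 1"
    using w q I by (simp add: powr_powr w_def)
  also have "(\<Sum>i\<in>I. (w powr (1/p) * y i) powr p) = (\<Sum>i\<in>I. y i powr p) / card I"
    using w p1 y by (simp add: powr_mult powr_powr w_def sum_divide_distrib)
  finally have "(\<Sum>i\<in>I. y i) / card I \<le> ((\<Sum>i\<in>I. y i powr p) / card I) powr (1/p)"
    by simp
  then have "((\<Sum>i\<in>I. y i) / card I) powr p \<le> (((\<Sum>i\<in>I. y i powr p) / card I) powr (1/p)) powr p"
    using y p1 by (intro powr_mono2) (auto simp: sum_nonneg)
  also have "\<dots> = (\<Sum>i\<in>I. y i powr p) / card I"
    using p1 by (simp add: powr_powr sum_nonneg)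
  finally show ?thesis .
qed

lemma mean_le_powr_mean:
  fixes y :: "'i \<Rightarrow> real"
  assumes I: "finite I" "I \<noteq> {}" and y: "\<And>i. i \<in> I \<Longrightarrow> y i \<ge> 0" and p: "p \<ge> 1"
  shows "(\<Sum>i\<in>I. y i) / card I \<le> ((\<Sum>i\<in>I. y i powr p) / card I) powr (1/p)"
proof -
  have "(((\<Sum>i\<in>I. y i) / card I) powr p) powr (1/p) \<le> ((\<Sum>i\<in>I. y i powr p) / card I) powr (1/p)"
    using powr_mean_le_mean_powr[OF I y p] p by (intro powr_mono2) auto
  then show ?thesis
    using y p by (simp add: powr_powr sum_nonneg)
qed

lemma power_mean_mono:
  fixes x :: "'i \<Rightarrow> real"
  assumes I: "finite I" "I \<noteq> {}" and x: "\<And>i. i \<in> I \<Longrightarrow> x i \<ge> 0" and ab: "0 < a" "a \<le> b"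
  shows "((\<Sum>i\<in>I. x i powr a) / card I) powr (1/a) \<le> ((\<Sum>i\<in>I. x i powr b) / card I) powr (1/b)"
proof -
  have "((\<Sum>i\<in>I. x i powr a) / card I) powr (b/a) \<le> (\<Sum>i\<in>I. (x i powr a) powr (b/a)) / card I"
    using ab x by (intro powr_mean_le_mean_powr[OF I]) auto
  then have "((\<Sum>i\<in>I. x i powr a) / card I) powr (b/a) \<le> (\<Sum>i\<in>I. x i powr b) / card I"
    using ab by (simp add: powr_powr)
  then have "(((\<Sum>i\<in>I. x i powr a) / card I) powr (b/a)) powr (1/b) \<le> ((\<Sum>i\<in>I. x i powr b) / card I) powr (1/b)"
    using ab by (intro powr_mono2) auto
  then show ?thesis
    using ab by (simp add: powr_powr sum_nonneg)
qed

lemma le_lp_sum: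
  fixes x :: "'i \<Rightarrow> real"
  assumes I: "finite I" and x: "\<And>i. i \<in> I \<Longrightarrow> x i \<ge> 0" and a: "0 < a" and j: "j \<in> I"
  shows "x j \<le> (\<Sum>i\<in>I. x i powr a) powr (1/a)"
proof -
  have "x j powr a \<le> (\<Sum>i\<in>I. x i powr a)"
    using I j x by (intro member_le_sum) auto
  then have "(x j powr a) powr (1/a) \<le> (\<Sum>i\<in>I. x i powr a) powr (1/a)"
    using x[OF j] a by (intro powr_mono2) auto
  then show ?thesis
    using x[OF j] a by (simp add: powr_powr)
qed

lemma lp_sum_antimono:
  fixes x :: "'i \<Rightarrow> real"
  assumes I: "finite I" and x: "\<And>i. i \<in> I \<Longrightarrow> x i \<ge> 0" and ab: "0 < a" "a \<le> b"
  shows "(\<Sum>i\<in>I. x i powr b) powr (1/b) \<le> (\<Sum>i\<in>I. x i powr a) powr (1/a)"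
proof -
  define T where "T = (\<Sum>i\<in>I. x i powr a) powr (1/a)"
  have T0: "T \<ge> 0"
    by (simp add: T_def)
  have xT: "x i \<le> T" if "i \<in> I" for i
    unfolding T_def by (rule le_lp_sum[OF I x ab(1) that])
  have "x i powr b \<le> x i powr a * T powr (b - a)" if i: "i \<in> I" for i
  proof (cases "x i = 0")
    case True
    then show ?thesis using ab by simp
  next
    case False
    then have "x i > 0" using x[OF i] by simp
    then have "x i powr b = x i powr a * x i powr (b - a)"
      by (simp add: powr_add[symmetric])
    also have "\<dots> \<le> x i powr a * T powr (b - a)"
      using xT[OF i] \<open>x i > 0\<close> ab by (intro mult_left_mono powr_mono2) auto
    finally show ?thesis .
  qed
  then have "(\<Sum>i\<in>I. x i powr b) \<le> (\<Sum>i\<in>I. x i powr a) * T powr (b - a)"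
    by (simp add: sum_distrib_right sum_mono)
  also have "(\<Sum>i\<in>I. x i powr a) = T powr a"
    using ab x by (simp add: T_def powr_powr sum_nonneg)
  also have "T powr a * T powr (b - a) = T powr b"
    using T0 ab by (cases "T = 0") (simp_all add: powr_add[symmetric])
  finally have "(\<Sum>i\<in>I. x i powr b) powr (1/b) \<le> (T powr b) powr (1/b)"
    using ab x by (intro powr_mono2) (auto intro: sum_nonneg)
  then show ?thesis
    using T0 ab by (simp add: powr_powr T_def)
qed

lemma lp_sum_le_card_powr:
  fixes x :: "'i \<Rightarrow> real"
  assumes I: "finite I" and x: "\<And>i. i \<in> I \<Longrightarrow> 0 \<le> x i \<and> x i \<le> M" and a: "0 < a"
  shows "(\<Sum>i\<in>I. x i powr a) powr (1/a) \<le> card I powr (1/a) * M"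
proof (cases "I = {}")
  case True
  then show ?thesis by simp
next
  case False
  then have M: "M \<ge> 0"
    using x by force
  have "(\<Sum>i\<in>I. x i powr a) \<le> card I * M powr a"
    using x a sum_mono[of I "\<lambda>i. x i powr a" "\<lambda>_. M powr a"] by (simp add: powr_mono2)
  then have "(\<Sum>i\<in>I. x i powr a) powr (1/a) \<le> (card I * M powr a) powr (1/a)"
    using a x by (intro powr_mono2) (auto intro: sum_nonneg)
  also have "\<dots> = card I powr (1/a) * M"
    using M a by (simp add: powr_mult powr_powr)
  finally show ?thesis .
qed

lemma lp_sum_le_group_mean:
  fixes r :: "nat \<Rightarrow> real"
  assumes N: "N > 0" and r: "\<And>z. z < N \<Longrightarrow> r z \<ge> 0" and s: "s \<ge> 1" and q: "q > 0"
  shows "(\<Sum>z<N. r z powr s) powr (1/s) \<le>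
    N powr (max (1/s) (1/q)) * ((1/N) * (\<Sum>z<N. r z powr q)) powr (1/q)"
proof -
  have split: "(\<Sum>z<N. r z powr t) powr (1/t) = N powr (1/t) * ((1/N) * (\<Sum>z<N. r z powr t)) powr (1/t)"
    if "t > 0" for t
    using N that by (simp add: powr_mult powr_divide sum_nonneg r)
  show ?thesis
  proof (cases "s \<ge> q")
    case True
    have "(\<Sum>z<N. r z powr s) powr (1/s) \<le> (\<Sum>z<N. r z powr q) powr (1/q)"
      using r q True by (intro lp_sum_antimono) auto
    also have "\<dots> \<le> N powr (max (1/s) (1/q)) * ((1/N) * (\<Sum>z<N. r z powr q)) powr (1/q)"
      unfolding split[OF q] using N by (intro mult_right_mono powr_mono) auto
    finally show ?thesis .
  next
    case False
    have "((\<Sum>z<N. r z powr s) / card {..<N}) powr (1/s) \<le> ((\<Sum>z<N. r z powr q) / card {..<N}) powr (1/q)"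
      using N r s False by (intro power_mean_mono) auto
    then have "N powr (1/s) * ((1/N) * (\<Sum>z<N. r z powr s)) powr (1/s) \<le>
        N powr (1/s) * ((1/N) * (\<Sum>z<N. r z powr q)) powr (1/q)"
      by (intro mult_left_mono) auto
    also have "\<dots> \<le> N powr (max (1/s) (1/q)) * ((1/N) * (\<Sum>z<N. r z powr q)) powr (1/q)"
      using N by (intro mult_right_mono powr_mono) auto
    finally show ?thesis
      using split s by simp
  qed
qed

lemma Max_le_group_mean:
  fixes r :: "nat \<Rightarrow> real"
  assumes N: "N > 0" and r: "\<And>z. z < N \<Longrightarrow> r z \<ge> 0" and q: "q > 0"
  shows "Max (r ` {..<N}) \<le> N powr (1/q) * ((1/N) * (\<Sum>z<N. r z powr q)) powr (1/q)"
proof -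
  have "Max (r ` {..<N}) \<le> (\<Sum>z<N. r z powr q) powr (1/q)"
    using N r q by (intro Max_image_lessThan_le le_lp_sum) auto
  also have "\<dots> = N powr (1/q) * ((1/N) * (\<Sum>z<N. r z powr q)) powr (1/q)"
    using N r by (simp add: powr_mult powr_divide sum_nonneg)
  finally show ?thesis .
qed

lemma power2_powr_half: "((x::real)^2) powr (r/2) = \<bar>x\<bar> powr r"
proof -
  have "x^2 = \<bar>x\<bar> powr 2"
    using powr_realpow'[of "\<bar>x\<bar>" 2] by simp
  then have "(x^2) powr (r/2) = \<bar>x\<bar> powr (2 * (r/2))"
    by (simp only: powr_powr)
  then show ?thesis
    by simp
qed

section \<open>Vector norms and the group norm\<close>

lemma lnorm_ereal: "lnorm n v (ereal p) = (\<Sum>i<n. cmod (v i) powr p) powr (1/p)"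
  by (simp add: lnorm_def)

lemma lnorm_infinity: "lnorm n v \<infinity> = Max ((\<lambda>i. cmod (v i)) ` {..<n})"
  by (simp add: lnorm_def)

lemma hconj_one: "hconj 1 = \<infinity>"
  by (simp add: hconj_def)

lemma hconj_gt_one: "p > 1 \<Longrightarrow> hconj p = ereal (p/(p-1))"
  by (simp add: hconj_def)

lemma lnorm_hconj_gt_one:
  "p > 1 \<Longrightarrow> lnorm n v (hconj p) = (\<Sum>i<n. cmod (v i) powr (p/(p-1))) powr (1 / (p/(p-1)))"
  by (simp add: hconj_gt_one lnorm_ereal)

lemma lnorm_nonneg: "n > 0 \<Longrightarrow> lnorm n v r \<ge> 0"
  unfolding lnorm_def by (auto intro: order.trans[OF _ le_Max_image_lessThan[of 0 n]])

lemma cmod_le_lnorm_hconj: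
  assumes "j < n" "p \<ge> 1"
  shows "cmod (v j) \<le> lnorm n v (hconj p)"
proof (cases "p = 1")
  case True
  then show ?thesis
    using assms by (simp add: hconj_one lnorm_infinity le_Max_image_lessThan)
next
  case False
  then have "p > 1"
    using assms by simp
  then have "cmod (v j) \<le> (\<Sum>i<n. cmod (v i) powr (p/(p-1))) powr (1/(p/(p-1)))"
    using assms by (intro le_lp_sum) auto
  then show ?thesis
    using \<open>p > 1\<close> by (simp only: lnorm_hconj_gt_one)
qed

lemma lnorm_mono:
  assumes "\<And>i. i < n \<Longrightarrow> cmod (v i) \<le> cmod (w i)" "n > 0" "r > 0"
  shows "lnorm n v r \<le> lnorm n w r"
proof (cases r)
  case (real p)
  then show ?thesis
    using assms by (auto simp: lnorm_ereal intro!: powr_mono2 sum_mono sum_nonneg)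
next
  case PInf
  then show ?thesis
    using assms by (auto simp: lnorm_infinity intro!: Max_image_lessThan_le
        intro: order.trans[OF _ le_Max_image_lessThan])
qed (use assms in simp)

lemma lnorm_scale:
  assumes "c \<ge> 0" "n > 0" "r > 0"
  shows "lnorm n (\<lambda>i. complex_of_real c * v i) r = c * lnorm n v r"
proof (cases r)
  case (real p)
  then have "(\<Sum>i<n. (c * cmod (v i)) powr p) = c powr p * (\<Sum>i<n. cmod (v i) powr p)"
    using assms by (simp add: powr_mult sum_distrib_left)
  then show ?thesis
    using real assms by (simp add: lnorm_ereal norm_mult powr_mult powr_powr)
next
  case PInf
  have "Max ((\<lambda>i. c * cmod (v i)) ` {..<n}) = Max ((*) c ` (\<lambda>i. cmod (v i)) ` {..<n})"
    by (simp add: image_image)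
  also have "\<dots> = c * Max ((\<lambda>i. cmod (v i)) ` {..<n})"
    using assms by (intro mono_Max_commute[symmetric]) (auto simp: mono_def mult_left_mono)
  finally have "Max ((\<lambda>i. c * cmod (v i)) ` {..<n}) = c * Max ((\<lambda>i. cmod (v i)) ` {..<n})" .
  then show ?thesis
    using PInf assms by (simp add: lnorm_infinity norm_mult)
qed (use assms in simp)

lemma lnorm_holder:
  assumes "D > 0" "p \<ge> 1"
  shows "cmod (\<Sum>x<D. a x * b x) \<le> lnorm D a (ereal p) * lnorm D b (hconj p)"
proof -
  have "cmod (\<Sum>x<D. a x * b x) \<le> (\<Sum>x<D. cmod (a x) * cmod (b x))"
    by (rule order.trans[OF norm_sum]) (simp add: norm_mult)
  also have "\<dots> \<le> lnorm D a (ereal p) * lnorm D b (hconj p)"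
  proof (cases "p = 1")
    case True
    have "(\<Sum>x<D. cmod (a x) * cmod (b x)) \<le> (\<Sum>x<D. cmod (a x) * lnorm D b (hconj p))"
      using assms by (intro sum_mono mult_left_mono cmod_le_lnorm_hconj) auto
    then show ?thesis
      using True by (simp add: lnorm_ereal sum_distrib_right sum_nonneg)
  next
    case False
    then have "p > 1"
      using assms by simp
    then have "(\<Sum>x<D. cmod (a x) * cmod (b x)) \<le>
        (\<Sum>x<D. cmod (a x) powr p) powr (1/p) * (\<Sum>x<D. cmod (b x) powr (p/(p-1))) powr (1/(p/(p-1)))"
      by (intro holder_inequality) (auto simp: field_simps)
    then show ?thesis
      using \<open>p > 1\<close> by (simp only: lnorm_ereal lnorm_hconj_gt_one)
  qed
  finally show ?thesis .
qed

lemma ereal_recip_ereal: "ereal_recip (ereal q) = 1 / q"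
  by (simp add: ereal_recip_def)

lemma ereal_recip_infinity: "ereal_recip \<infinity> = 0"
  by (simp add: ereal_recip_def)

lemma group_norm_nonneg:
  assumes "dim_row M > 0" "dim_col M > 0"
  shows "group_norm M p q \<ge> 0"
  using assms lnorm_nonneg[OF assms(2)]
  unfolding group_norm_def Let_def by (auto intro: order.trans[OF _ le_Max_image_lessThan[of 0]])

definition lq_mean :: "nat \<Rightarrow> (nat \<Rightarrow> real) \<Rightarrow> ereal \<Rightarrow> real" where
  "lq_mean N r q = (if q = \<infinity> then Max (r ` {..<N})
     else ((1 / real N) * (\<Sum>i<N. r i powr real_of_ereal q)) powr (1 / real_of_ereal q))"

lemma group_norm_eq_lq_mean:
  "group_norm M p q = lq_mean (dim_row M) (\<lambda>i. lnorm (dim_col M) (\<lambda>j. M $$ (i,j)) (ereal p)) q"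
  by (simp add: group_norm_def lq_mean_def Let_def)

lemma Max_le_lq_mean:
  assumes "N > 0" "\<And>z. z < N \<Longrightarrow> r z \<ge> 0" "q > 0"
  shows "Max (r ` {..<N}) \<le> real N powr ereal_recip q * lq_mean N r q"
proof (cases q)
  case (real q')
  then show ?thesis
    using assms Max_le_group_mean[of N r q'] by (simp add: lq_mean_def ereal_recip_ereal)
qed (use assms in \<open>simp_all add: lq_mean_def ereal_recip_infinity\<close>)

lemma lp_sum_le_lq_mean:
  assumes N: "N > 0" and r: "\<And>z. z < N \<Longrightarrow> r z \<ge> 0" and s: "s \<ge> 1" and q: "q > 0"
  shows "(\<Sum>z<N. r z powr s) powr (1/s) \<le> real N powr max (1/s) (ereal_recip q) * lq_mean N r q"
proof (cases q)
  case (real q')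
  then show ?thesis
    using assms lp_sum_le_group_mean[of N r s q'] by (simp add: lq_mean_def ereal_recip_ereal)
next
  case PInf
  have "(\<Sum>z<N. r z powr s) powr (1/s) \<le> card {..<N} powr (1/s) * Max (r ` {..<N})"
    using r s by (intro lp_sum_le_card_powr) (auto intro: le_Max_image_lessThan)
  then show ?thesis
    using PInf s by (simp add: lq_mean_def ereal_recip_infinity max_def)
qed (use q in simp)

lemma lnorm_row_norms_le_group_norm:
  fixes M :: "complex mat" and p :: real and q :: ereal
  defines "r \<equiv> \<lambda>z. lnorm (dim_col M) (\<lambda>j. M $$ (z,j)) (ereal p)"
  assumes N: "dim_row M > 0" and D: "dim_col M > 0" and p: "p \<ge> 1" and q: "q > 0"
  shows "lnorm (dim_row M) (\<lambda>z. complex_of_real (r z)) (hconj p) \<le>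
    real (dim_row M) powr (max (1 - 1/p) (ereal_recip q)) * group_norm M p q"
proof -
  have r0: "r z \<ge> 0" for z
    unfolding r_def using D by (rule lnorm_nonneg)
  show ?thesis
  proof (cases "p = 1")
    case True
    then have "max (1 - 1/p) (ereal_recip q) = ereal_recip q"
      using q by (cases q) (auto simp: ereal_recip_def)
    then show ?thesis
      using True Max_le_lq_mean[OF N _ q, of r] r0
      by (simp add: hconj_one lnorm_infinity group_norm_eq_lq_mean r_def)
  next
    case False
    define s where "s = p / (p - 1)"
    have "s \<ge> 1" "1/s = 1 - 1/p"
      using False p by (auto simp: s_def field_simps)
    then show ?thesis
      using False p r0 lp_sum_le_lq_mean[OF N _ \<open>s \<ge> 1\<close> q, of r]
      by (simp add: lnorm_hconj_gt_one s_def group_norm_eq_lq_mean r_def)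
  qed
qed

lemma lnorm_mat_vec_le:
  fixes M :: "complex mat" and u :: "nat \<Rightarrow> complex"
  assumes N: "dim_row M > 0" and D: "dim_col M > 0" and p: "p \<ge> 1" and q: "q > 0"
  shows "lnorm (dim_row M) (\<lambda>z. \<Sum>x<dim_col M. M $$ (z,x) * u x) (hconj p) \<le>
    real (dim_row M) powr (max (1 - 1/p) (ereal_recip q)) * group_norm M p q
      * lnorm (dim_col M) u (hconj p)"
proof -
  define r where "r z = lnorm (dim_col M) (\<lambda>j. M $$ (z,j)) (ereal p)" for z
  define U where "U = lnorm (dim_col M) u (hconj p)"
  have U0: "U \<ge> 0"
    unfolding U_def using D by (rule lnorm_nonneg)
  have hconj_pos: "hconj p > 0"
    using p by (simp add: hconj_def)
  have row: "cmod (\<Sum>x<dim_col M. M $$ (z,x) * u x) \<le> cmod (complex_of_real U * complex_of_real (r z))"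
    for z
    using lnorm_holder[OF D p, of "\<lambda>x. M $$ (z,x)" u] lnorm_nonneg[OF D] U0
    by (simp add: r_def U_def norm_mult mult.commute)
  have "lnorm (dim_row M) (\<lambda>z. \<Sum>x<dim_col M. M $$ (z,x) * u x) (hconj p)
      \<le> lnorm (dim_row M) (\<lambda>z. complex_of_real U * complex_of_real (r z)) (hconj p)"
    using N hconj_pos row by (intro lnorm_mono)
  also have "\<dots> = U * lnorm (dim_row M) (\<lambda>z. complex_of_real (r z)) (hconj p)"
    using U0 N hconj_pos by (rule lnorm_scale)
  also have "\<dots> \<le> U * (real (dim_row M) powr (max (1 - 1/p) (ereal_recip q)) * group_norm M p q)"
    using U0 lnorm_row_norms_le_group_norm[OF N D p q] by (intro mult_left_mono) (auto simp: r_def)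
  finally show ?thesis
    by (simp add: U_def mult_ac)
qed

section \<open>Propagating norms through a circuit\<close>

lemma lnorm_circuit_coeffs_le:
  assumes "p \<ge> 1" "q > 0" "t \<le> length Cs"
  shows "lnorm (4^(ns!t)) (circuit_coeffs Cs ns t u) (hconj p) \<le>
    (\<Prod>i<t. real (4^(ns!Suc i)) powr max (1 - 1/p) (ereal_recip q)
       * group_norm (rep_mat (ns!i) (ns!Suc i) (Cs!i)) p q)
    * lnorm (4^(ns!0)) u (hconj p)"
  using assms(3)
proof (induction t)
  case 0
  then show ?case by simp
next
  case (Suc t)
  let ?M = "rep_mat (ns!t) (ns!Suc t) (Cs!t)"
  have dims: "dim_row ?M > 0" "dim_col ?M > 0"
    by (simp_all add: rep_mat_def)
  have "lnorm (4^(ns!Suc t)) (circuit_coeffs Cs ns (Suc t) u) (hconj p) \<le>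
      real (4^(ns!Suc t)) powr max (1 - 1/p) (ereal_recip q) * group_norm ?M p q
        * lnorm (4^(ns!t)) (circuit_coeffs Cs ns t u) (hconj p)"
    using lnorm_mat_vec_le[OF dims assms(1,2)] by (simp add: rep_mat_def)
  also have "\<dots> \<le> real (4^(ns!Suc t)) powr max (1 - 1/p) (ereal_recip q) * group_norm ?M p q *
     ((\<Prod>i<t. real (4^(ns!Suc i)) powr max (1 - 1/p) (ereal_recip q)
         * group_norm (rep_mat (ns!i) (ns!Suc i) (Cs!i)) p q)
       * lnorm (4^(ns!0)) u (hconj p))"
    using Suc group_norm_nonneg[OF dims] by (intro mult_left_mono) auto
  finally show ?case
    by (simp add: mult_ac)
qed

lemma prod_qubit_powers:
  "(\<Prod>i<l. real (4^(ns!Suc i)) powr c * g i) = 4 powr ((\<Sum>i\<in>{1..l}. real (ns ! i)) * c) * (\<Prod>i<l. g i)"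
proof (induction l)
  case 0
  then show ?case by simp
next
  case (Suc l)
  have "real (4^(ns!Suc l)) powr c = 4 powr (real (ns ! Suc l) * c)"
    by (simp add: powr_realpow[symmetric] powr_powr)
  moreover have "4 powr ((\<Sum>i\<in>{1..Suc l}. real (ns ! i)) * c) =
      4 powr ((\<Sum>i\<in>{1..l}. real (ns ! i)) * c) * 4 powr (real (ns ! Suc l) * c)"
    by (simp add: distrib_right powr_add)
  ultimately show ?case
    using Suc by (simp add: mult_ac)
qed

lemma lnorm_circuit_coeffs_le_mu_pq:
  assumes C: "Cs \<in> circuits l ns" and p: "p \<ge> 1" and q: "q > 0" and mu: "mu_pq p q ns Cs \<le> \<mu>"
  shows "lnorm (4^(ns!l)) (circuit_coeffs Cs ns l u) (hconj p) \<le>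
    4 powr ((\<Sum>i\<in>{1..l}. real (ns!i)) * max (1 - 1/p) (ereal_recip q)) * \<mu> * lnorm (4^(ns!0)) u (hconj p)"
proof -
  define E where "E = 4 powr ((\<Sum>i\<in>{1..l}. real (ns!i)) * max (1 - 1/p) (ereal_recip q))"
  have "length Cs = l"
    using C by (simp add: circuits_def)
  then have "lnorm (4^(ns!l)) (circuit_coeffs Cs ns l u) (hconj p) \<le> E * mu_pq p q ns Cs * lnorm (4^(ns!0)) u (hconj p)"
    using lnorm_circuit_coeffs_le[OF p q, of l Cs ns u]
    unfolding prod_qubit_powers by (simp add: E_def mu_pq_def)
  also have "\<dots> \<le> E * \<mu> * lnorm (4^(ns!0)) u (hconj p)"
    using mu by (intro mult_right_mono mult_left_mono lnorm_nonneg) (auto simp: E_def)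
  finally show ?thesis
    by (simp add: E_def)
qed

definition signed_sum :: "nat \<Rightarrow> real list \<Rightarrow> (nat \<Rightarrow> nat \<Rightarrow> complex) \<Rightarrow> nat \<Rightarrow> complex" where
  "signed_sum m es f z = (\<Sum>i<m. complex_of_real (es!i) * f i z)"

text \<open>For one circuit and one sign vector, Hoelder's inequality at the output
  and the layerwise bound move the signs onto the input coefficient vectors.\<close>

lemma abs_signed_sum_model_fun_le:
  assumes C: "Cs \<in> circuits l ns" and p: "p \<ge> 1" and q: "q > 0" and mu: "mu_pq p q ns Cs \<le> \<mu>"
    and pure: "\<forall>x. pure_state (ns ! 0) (\<rho> x)" and H: "hermitian (2 ^ (ns ! l)) H"
  shows "\<bar>\<Sum>i<m. es!i * model_fun \<rho> H Cs (xs!i)\<bar> \<le>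
    \<mu> * 4 powr ((\<Sum>i\<in>{1..l}. real (ns!i)) * max (1 - 1/p) (ereal_recip q)) *
    lnorm (4^(ns!l)) (alpha_vec (ns!l) H) (ereal p) *
    lnorm (4^(ns!0)) (signed_sum m es (\<lambda>i. fI_vec (ns!0) (\<rho> (xs!i)))) (hconj p)"
proof -
  define u where "u = (\<lambda>i. fI_vec (ns!0) (\<rho> (xs!i)))"
  define \<alpha> where "\<alpha> = alpha_vec (ns!l) H"
  define W where "W = circuit_coeffs Cs ns l (signed_sum m es u)"
  have W: "W = (\<lambda>z. \<Sum>i<m. complex_of_real (es!i) * circuit_coeffs Cs ns l (u i) z)"
    unfolding W_def signed_sum_def[abs_def] by (rule circuit_coeffs_linear)
  have "model_fun \<rho> H Cs (xs!i) = Re (\<Sum>z<4^(ns!l). \<alpha> z * circuit_coeffs Cs ns l (u i) z)" for i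
    using H pure by (simp add: model_fun_eq_coeffs[OF C] hermitian_def \<alpha>_def u_def)
  then have "(\<Sum>i<m. es!i * model_fun \<rho> H Cs (xs!i))
      = Re (\<Sum>i<m. complex_of_real (es!i) * (\<Sum>z<4^(ns!l). \<alpha> z * circuit_coeffs Cs ns l (u i) z))"
    by (simp add: Re_sum)
  also have "\<dots> = Re (\<Sum>i<m. \<Sum>z<4^(ns!l). \<alpha> z * (complex_of_real (es!i) * circuit_coeffs Cs ns l (u i) z))"
    by (simp only: sum_distrib_left mult.left_commute)
  also have "\<dots> = Re (\<Sum>z<4^(ns!l). \<alpha> z * W z)"
    unfolding W by (simp add: sum_distrib_left sum.swap[of _ "{..<m}"])
  finally have "\<bar>\<Sum>i<m. es!i * model_fun \<rho> H Cs (xs!i)\<bar> \<le> cmod (\<Sum>z<4^(ns!l). \<alpha> z * W z)"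
    by (simp only: abs_Re_le_cmod)
  also have "\<dots> \<le> lnorm (4^(ns!l)) \<alpha> (ereal p) * lnorm (4^(ns!l)) W (hconj p)"
    using p by (intro lnorm_holder) auto
  also have "\<dots> \<le> lnorm (4^(ns!l)) \<alpha> (ereal p) *
      (4 powr ((\<Sum>i\<in>{1..l}. real (ns!i)) * max (1 - 1/p) (ereal_recip q)) * \<mu>
        * lnorm (4^(ns!0)) (signed_sum m es u) (hconj p))"
    unfolding W_def using lnorm_circuit_coeffs_le_mu_pq[OF C p q mu]
    by (intro mult_left_mono) (simp_all add: lnorm_nonneg)
  finally show ?thesis
    by (simp add: u_def \<alpha>_def mult_ac)
qed

section \<open>Rademacher sums and Khintchine's inequality\<close>

definition signs :: "nat \<Rightarrow> real list set" where
  "signs m = {es. length es = m \<and> set es \<subseteq> {-1, 1}}"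

definition sign_mean :: "nat \<Rightarrow> (real list \<Rightarrow> real) \<Rightarrow> real" where
  "sign_mean m F = (\<Sum>es\<in>signs m. F es) / card (signs m)"

lemma signs_0: "signs 0 = {[]}"
  by (auto simp: signs_def)

lemma signs_Suc: "signs (Suc m) = (Cons 1) ` signs m \<union> (Cons (-1)) ` signs m"
proof (rule Set.set_eqI)
  fix es
  show "es \<in> signs (Suc m) \<longleftrightarrow> es \<in> (Cons 1) ` signs m \<union> (Cons (-1)) ` signs m"
    by (cases es) (auto simp: signs_def)
qed

lemma finite_signs: "finite (signs m)"
  by (induction m) (auto simp: signs_0 signs_Suc)

lemma sum_signs_Suc: "(\<Sum>es\<in>signs (Suc m). F es) = (\<Sum>es\<in>signs m. F (1 # es) + F ((-1) # es))"
proof -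
  have "(Cons 1) ` signs m \<inter> (Cons (-1)) ` signs m = {}"
    by auto
  then have "(\<Sum>es\<in>signs (Suc m). F es) =
      (\<Sum>es\<in>(Cons 1) ` signs m. F es) + (\<Sum>es\<in>(Cons (-1)) ` signs m. F es)"
    unfolding signs_Suc by (intro sum.union_disjoint) (auto simp: finite_signs)
  also have "\<dots> = (\<Sum>es\<in>signs m. F (1 # es)) + (\<Sum>es\<in>signs m. F ((-1) # es))"
    by (simp add: sum.reindex)
  finally show ?thesis
    by (simp add: sum.distrib)
qed

lemma card_signs: "card (signs m) = 2^m"
proof (induction m)
  case 0
  then show ?case by (simp add: signs_0)
next
  case (Suc m)
  have "card (signs (Suc m)) = (\<Sum>es\<in>signs (Suc m). 1)"
    by simp
  also have "\<dots> = 2 * card (signs m)"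
    by (subst sum_signs_Suc) simp
  finally show ?case
    using Suc by simp
qed

lemma signs_nonempty: "signs m \<noteq> {}"
  using card_signs[of m] by auto

lemma sign_mean_mono: "(\<And>es. es \<in> signs m \<Longrightarrow> F es \<le> G es) \<Longrightarrow> sign_mean m F \<le> sign_mean m G"
  unfolding sign_mean_def by (intro divide_right_mono sum_mono) auto

lemma sign_mean_le_powr_sign_mean:
  "(\<And>es. F es \<ge> 0) \<Longrightarrow> p \<ge> 1 \<Longrightarrow> sign_mean m F \<le> sign_mean m (\<lambda>es. F es powr p) powr (1/p)"
  unfolding sign_mean_def
  by (rule mean_le_powr_mean) (auto simp: finite_signs signs_nonempty)

lemma sum_atMost_double_even:
  fixes g :: "nat \<Rightarrow> real"
  shows "(\<Sum>i\<le>2*k. if even i then g i else 0) = (\<Sum>j\<le>k. g (2*j))"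
proof (induction k)
  case 0
  then show ?case by simp
next
  case (Suc k)
  have "2 * Suc k = Suc (Suc (2*k))"
    by simp
  then show ?case
    using Suc by (simp add: atMost_Suc)
qed

lemma power_add_power_diff_even:
  fixes a y :: real
  shows "(y + a)^(2*k) + (y - a)^(2*k) = (\<Sum>j\<le>k. 2 * real ((2*k) choose (2*j)) * a^(2*j) * y^(2*k - 2*j))"
proof -
  have "(y + a)^(2*k) + (y - a)^(2*k) =
      (\<Sum>i\<le>2*k. real ((2*k) choose i) * a^i * y^(2*k-i) + real ((2*k) choose i) * (-a)^i * y^(2*k-i))"
    using binomial_ring[of a y "2*k"] binomial_ring[of "-a" y "2*k"] by (simp add: sum.distrib add.commute)
  also have "\<dots> = (\<Sum>i\<le>2*k. if even i then 2 * real ((2*k) choose i) * a^i * y^(2*k-i) else 0)"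
    by (intro sum.cong refl) (auto simp: power_minus')
  also have "\<dots> = (\<Sum>j\<le>k. 2 * real ((2*k) choose (2*j)) * a^(2*j) * y^(2*k - 2*j))"
    by (rule sum_atMost_double_even)
  finally show ?thesis .
qed

text \<open>\<open>dfact k = (2k-1)!!\<close>, the \<open>2k\<close>-th moment of a standard Gaussian.\<close>

fun dfact :: "nat \<Rightarrow> real" where
  "dfact 0 = 1"
| "dfact (Suc k) = (2 * real k + 1) * dfact k"

lemma dfact_pos: "dfact k > 0"
  by (induction k) auto

lemma dfact_eq_fact: "dfact k * 2^k * fact k = fact (2*k)"
proof (induction k)
  case 0
  then show ?case by simp
next
  case (Suc k)
  have "2 * Suc k = Suc (Suc (2*k))"
    by simp
  have "dfact (Suc k) * 2^Suc k * fact (Suc k) = (2 * real k + 1) * (2 * real k + 2) * (dfact k * 2^k * fact k)"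
    by (simp add: algebra_simps)
  also have "\<dots> = fact (2 * Suc k)"
    unfolding Suc \<open>2 * Suc k = _\<close> by (simp add: algebra_simps)
  finally show ?case .
qed

lemma power_two_fact_le_fact_double: "(2::real)^j * fact j \<le> fact (2*j)"
proof (induction j)
  case 0
  then show ?case by simp
next
  case (Suc j)
  have "2 * Suc j = Suc (Suc (2*j))"
    by simp
  have "(2::real)^Suc j * fact (Suc j) = (2 * real j + 2) * (2^j * fact j)"
    by (simp add: algebra_simps)
  also have "\<dots> \<le> (2 * real j + 2) * fact (2*j)"
    using Suc by (intro mult_left_mono) auto
  also have "\<dots> \<le> (2 * real j + 2) * (2 * real j + 1) * fact (2*j)"
    by (simp add: mult_right_mono)
  also have "\<dots> = fact (2 * Suc j)"
    unfolding \<open>2 * Suc j = _\<close> by (simp add: algebra_simps)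
  finally show ?case .
qed

lemma dfact_le_power: "dfact k \<le> real k ^ k"
proof (induction k)
  case 0
  then show ?case by simp
next
  case (Suc k)
  show ?case
  proof (cases "k = 0")
    case True
    then show ?thesis by simp
  next
    case False
    have "0 \<le> 1 / real k"
      by simp
    then have "1 + real k * (1 / real k) \<le> (1 + 1 / real k)^k"
      by (intro Bernoulli_inequality) linarith
    then have "2 * real k ^ k \<le> (1 + 1 / real k)^k * real k ^ k"
      using False by (intro mult_right_mono) auto
    also have "\<dots> = (real k + 1)^k"
      using False by (simp add: power_mult_distrib[symmetric] field_simps)
    finally have doubling: "2 * real k ^ k \<le> (real k + 1)^k" .
    have "dfact (Suc k) = (2 * real k + 1) * dfact k"
      by simp
    also have "\<dots> \<le> (2 * real k + 2) * real k ^ k"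
      using Suc dfact_pos[of k] by (intro mult_mono) auto
    also have "\<dots> = (real k + 1) * (2 * real k ^ k)"
      by (simp add: algebra_simps)
    also have "\<dots> \<le> (real k + 1) * (real k + 1)^k"
      using doubling by (intro mult_left_mono) auto
    finally show ?thesis
      by (simp add: add.commute)
  qed
qed



lemma binomial_double_mult_dfact_le:
  assumes "j \<le> k"
  shows "real ((2*k) choose (2*j)) * dfact (k - j) \<le> dfact k * real (k choose j)"
proof -
  have d: "dfact n = fact (2*n) / (2^n * fact n)" for n
    using dfact_eq_fact[of n] by (simp add: field_simps)
  have e: "2*k - 2*j = 2*(k-j)" "k*2 - j*2 = (k-j)*2"
    by simp_all
  have p: "(2::real)^k = 2^j * 2^(k-j)"
    using assms by (simp add: power_add[symmetric])
  have "real ((2*k) choose (2*j)) * dfact (k - j) = fact (2*k) / (fact (2*j) * (2^(k-j) * fact (k-j)))"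
    using assms by (simp add: binomial_fact d e field_simps)
  also have "\<dots> \<le> fact (2*k) / ((2^j * fact j) * (2^(k-j) * fact (k-j)))"
    by (intro divide_left_mono mult_right_mono power_two_fact_le_fact_double) (auto intro!: mult_pos_pos)
  also have "\<dots> = dfact k * real (k choose j)"
    using assms by (simp add: binomial_fact d p field_simps)
  finally show ?thesis .
qed

text \<open>Khintchine's inequality for even moments, with the sharp Gaussian constant.\<close>

lemma sum_signs_power_even_le:
  "(\<Sum>es\<in>signs m. (\<Sum>i<m. es!i * a i)^(2*k)) \<le> 2^m * dfact k * (\<Sum>i<m. (a i)^2)^k"
proof (induction m arbitrary: a k)
  case 0
  then show ?case by (cases k) (simp_all add: signs_0)
next
  case (Suc m)
  define Y where "Y es = (\<Sum>i<m. es!i * a (Suc i))" for es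
  define S where "S = (\<Sum>i<m. (a (Suc i))^2)"
  have S0: "S \<ge> 0"
    unfolding S_def by (simp add: sum_nonneg)
  have first: "(\<Sum>i<Suc m. (e # es)!i * a i) = e * a 0 + Y es" for e es
    unfolding Y_def sum.lessThan_Suc_shift by simp
  have "(\<Sum>es\<in>signs (Suc m). (\<Sum>i<Suc m. es!i * a i)^(2*k))
      = (\<Sum>es\<in>signs m. (Y es + a 0)^(2*k) + (Y es - a 0)^(2*k))"
    unfolding sum_signs_Suc first by (simp add: add.commute)
  also have "\<dots> = (\<Sum>es\<in>signs m. \<Sum>j\<le>k. 2 * real ((2*k) choose (2*j)) * (a 0)^(2*j) * (Y es)^(2*(k-j)))"
    by (simp only: power_add_power_diff_even diff_mult_distrib2)
  also have "\<dots> = (\<Sum>j\<le>k. 2 * real ((2*k) choose (2*j)) * ((a 0)^2)^j * (\<Sum>es\<in>signs m. (Y es)^(2*(k-j))))"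
    by (simp add: sum.swap[of _ "signs m"] sum_distrib_left power_mult)
  also have "\<dots> \<le> (\<Sum>j\<le>k. 2 * real ((2*k) choose (2*j)) * ((a 0)^2)^j * (2^m * dfact (k-j) * S^(k-j)))"
    unfolding Y_def S_def by (intro sum_mono mult_left_mono Suc.IH) auto
  also have "\<dots> \<le> (\<Sum>j\<le>k. 2^Suc m * dfact k * (real (k choose j) * ((a 0)^2)^j * S^(k-j)))"
  proof (rule sum_mono)
    fix j
    assume "j \<in> {..k}"
    then have "(real ((2*k) choose (2*j)) * dfact (k - j)) * (2 * 2^m * ((a 0)^2)^j * S^(k-j))
        \<le> (dfact k * real (k choose j)) * (2 * 2^m * ((a 0)^2)^j * S^(k-j))"
      using S0 by (intro mult_right_mono binomial_double_mult_dfact_le) auto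
    then show "2 * real ((2*k) choose (2*j)) * ((a 0)^2)^j * (2^m * dfact (k-j) * S^(k-j))
        \<le> 2^Suc m * dfact k * (real (k choose j) * ((a 0)^2)^j * S^(k-j))"
      by (simp add: mult_ac)
  qed
  also have "\<dots> = 2^Suc m * dfact k * ((a 0)^2 + S)^k"
    by (simp add: binomial_ring sum_distrib_left)
  also have "(a 0)^2 + S = (\<Sum>i<Suc m. (a i)^2)"
    unfolding S_def sum.lessThan_Suc_shift by simp
  finally show ?case .
qed

lemma dfact_root_le_sqrt:
  assumes "k \<ge> 1" "real k \<le> r"
  shows "dfact k powr (1 / (2 * real k)) \<le> sqrt r"
proof -
  have "dfact k \<le> real k ^ k"
    by (rule dfact_le_power)
  also have "\<dots> \<le> r ^ k"
    using assms by (intro power_mono) auto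
  finally have "dfact k \<le> r ^ k" .
  then have "dfact k powr (1 / (2 * real k)) \<le> (r ^ k) powr (1 / (2 * real k))"
    using dfact_pos[of k] by (intro powr_mono2) auto
  also have "\<dots> = r powr (1/2)"
    using assms by (simp add: powr_realpow[symmetric] powr_powr)
  finally show ?thesis
    using assms by (simp add: powr_half_sqrt)
qed

text \<open>Khintchine's inequality in \<open>L_r\<close>, from the moment of order \<open>2k \<ge> r\<close> by Jensen's inequality.\<close>

lemma sign_mean_abs_powr_le:
  fixes a :: "nat \<Rightarrow> real"
  assumes r: "r > 0" and k: "k \<ge> 1" "r \<le> 2 * real k"
  shows "sign_mean m (\<lambda>es. \<bar>\<Sum>i<m. es!i * a i\<bar> powr r)
    \<le> dfact k powr (r / (2 * real k)) * (\<Sum>i<m. (a i)^2) powr (r/2)"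
proof -
  define U where "U es = (\<Sum>i<m. es!i * a i)" for es
  define S where "S = (\<Sum>i<m. (a i)^2)"
  have "S \<ge> 0"
    unfolding S_def by (simp add: sum_nonneg)
  have even_power: "(\<bar>U es\<bar> powr r) powr (2 * real k / r) = (U es)^(2*k)" for es
  proof -
    have "(\<bar>U es\<bar> powr r) powr (2 * real k / r) = \<bar>U es\<bar> powr (real (2*k))"
      using r by (simp add: powr_powr)
    also have "\<dots> = \<bar>U es\<bar> ^ (2*k)"
      using k by (intro powr_realpow') auto
    finally show ?thesis
      by (simp add: power_mult)
  qed
  have moment: "sign_mean m (\<lambda>es. (U es)^(2*k)) \<le> dfact k * S ^ k"
    using sum_signs_power_even_le[where m=m and a=a and k=k]
    unfolding sign_mean_def card_signs U_def S_def by (simp add: field_simps)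
  have "0 \<le> sign_mean m (\<lambda>es. (U es)^(2*k))"
    unfolding sign_mean_def by (intro divide_nonneg_nonneg sum_nonneg) (auto simp: power_mult)
  have "sign_mean m (\<lambda>es. \<bar>U es\<bar> powr r) \<le>
      sign_mean m (\<lambda>es. (\<bar>U es\<bar> powr r) powr (2 * real k / r)) powr (1 / (2 * real k / r))"
    using k r by (intro sign_mean_le_powr_sign_mean) (auto simp: field_simps)
  also have "\<dots> = sign_mean m (\<lambda>es. (U es)^(2*k)) powr (r / (2 * real k))"
    by (simp add: even_power)
  also have "\<dots> \<le> (dfact k * S ^ k) powr (r / (2 * real k))"
    using moment \<open>0 \<le> sign_mean m _\<close> r k by (simp add: powr_mono2)
  also have "\<dots> = dfact k powr (r / (2 * real k)) * S powr (r/2)"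
    using k r \<open>S \<ge> 0\<close> dfact_pos[of k]
    by (cases "S = 0") (simp_all add: powr_mult powr_realpow[symmetric] powr_powr)
  finally show ?thesis
    by (simp add: U_def S_def)
qed

lemma khintchine_lp:
  fixes V :: "nat \<Rightarrow> nat \<Rightarrow> real"
  assumes r: "r \<ge> 1" and k: "k \<ge> 1" "r \<le> 2 * real k"
  shows "sign_mean m (\<lambda>es. (\<Sum>j<d. \<bar>\<Sum>i<m. es!i * V i j\<bar> powr r) powr (1/r))
    \<le> dfact k powr (1 / (2 * real k)) * (\<Sum>j<d. (\<Sum>i<m. (V i j)^2) powr (r/2)) powr (1/r)"
proof -
  define N where "N es = (\<Sum>j<d. \<bar>\<Sum>i<m. es!i * V i j\<bar> powr r) powr (1/r)" for es
  have r0: "r > 0"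
    using r by simp
  have "sign_mean m N \<le> sign_mean m (\<lambda>es. N es powr r) powr (1/r)"
    using r by (intro sign_mean_le_powr_sign_mean) (simp_all add: N_def)
  also have "sign_mean m (\<lambda>es. N es powr r) = (\<Sum>j<d. sign_mean m (\<lambda>es. \<bar>\<Sum>i<m. es!i * V i j\<bar> powr r))"
    using r0 by (simp add: N_def sign_mean_def powr_powr sum_nonneg sum.swap[of _ "signs m"] sum_divide_distrib)
  also have "(\<Sum>j<d. sign_mean m (\<lambda>es. \<bar>\<Sum>i<m. es!i * V i j\<bar> powr r)) powr (1/r)
     \<le> (\<Sum>j<d. dfact k powr (r / (2 * real k)) * (\<Sum>i<m. (V i j)^2) powr (r/2)) powr (1/r)"
    using r0 k sign_mean_abs_powr_le
    by (intro powr_mono2 sum_mono) (auto intro!: sum_nonneg divide_nonneg_nonneg simp: sign_mean_def)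
  also have "\<dots> = dfact k powr (1 / (2 * real k)) * (\<Sum>j<d. (\<Sum>i<m. (V i j)^2) powr (r/2)) powr (1/r)"
  proof -
    have "(dfact k powr (r / (2 * real k))) powr (1/r) = dfact k powr (1 / (2 * real k))"
      using r0 by (simp add: powr_powr)
    then show ?thesis
      using dfact_pos[of k] by (simp add: sum_distrib_left[symmetric] powr_mult sum_nonneg)
  qed
  finally show ?thesis
    by (simp add: N_def)
qed

lemma powr_le_of_root_le:
  fixes S M r :: real
  assumes "S powr (1/r) \<le> M" "S \<ge> 0" "r > 0"
  shows "S \<le> M powr r"
proof -
  have "(S powr (1/r)) powr r \<le> M powr r"
    using assms by (intro powr_mono2) auto
  then show ?thesis
    using assms by (simp add: powr_powr)
qed

lemma mixed_norm_le_sqrt_card: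
  fixes V :: "nat \<Rightarrow> nat \<Rightarrow> real"
  assumes m: "m > 0" and r: "r \<ge> 2" and M: "M \<ge> 0"
    and rows: "\<And>i. i < m \<Longrightarrow> (\<Sum>j<d. \<bar>V i j\<bar> powr r) \<le> M powr r"
  shows "(\<Sum>j<d. (\<Sum>i<m. (V i j)^2) powr (r/2)) powr (1/r) \<le> sqrt (real m) * M"
proof -
  have column: "(\<Sum>i<m. (V i j)^2) powr (r/2) \<le> real m powr (r/2 - 1) * (\<Sum>i<m. \<bar>V i j\<bar> powr r)" for j
  proof -
    have "((\<Sum>i<m. (V i j)^2) / card {..<m}) powr (r/2) \<le> (\<Sum>i<m. ((V i j)^2) powr (r/2)) / card {..<m}"
      using m r by (intro powr_mean_le_mean_powr) auto
    then have "(\<Sum>i<m. (V i j)^2) powr (r/2) / real m powr (r/2) \<le> (\<Sum>i<m. \<bar>V i j\<bar> powr r) / real m"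
      by (simp add: power2_powr_half powr_divide sum_nonneg)
    then have "(\<Sum>i<m. (V i j)^2) powr (r/2) \<le> real m powr (r/2) * ((\<Sum>i<m. \<bar>V i j\<bar> powr r) / real m)"
      using m by (simp add: divide_le_eq mult.commute)
    also have "\<dots> = real m powr (r/2 - 1) * (\<Sum>i<m. \<bar>V i j\<bar> powr r)"
      using m by (simp add: powr_diff)
    finally show ?thesis .
  qed
  have "(\<Sum>j<d. (\<Sum>i<m. (V i j)^2) powr (r/2)) \<le> real m powr (r/2 - 1) * (\<Sum>i<m. \<Sum>j<d. \<bar>V i j\<bar> powr r)"
    using sum_mono[of "{..<d}", OF column]
    by (simp add: sum_distrib_left sum.swap[of _ "{..<d}"])
  also have "\<dots> \<le> real m powr (r/2 - 1) * (\<Sum>i<m. M powr r)"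
    using rows by (intro mult_left_mono sum_mono) auto
  also have "\<dots> = real m powr (r/2) * M powr r"
    using m by (simp add: powr_diff)
  finally have "(\<Sum>j<d. (\<Sum>i<m. (V i j)^2) powr (r/2)) powr (1/r) \<le> (real m powr (r/2) * M powr r) powr (1/r)"
    using r by (intro powr_mono2) (auto intro: sum_nonneg)
  also have "\<dots> = sqrt (real m) * M"
    using r M by (simp add: powr_mult powr_powr powr_half_sqrt)
  finally show ?thesis .
qed

lemma mixed_norm_le_card_powr:
  fixes V :: "nat \<Rightarrow> nat \<Rightarrow> real"
  assumes r: "r \<ge> 1" "r \<le> 2" and M: "M \<ge> 0"
    and rows: "\<And>i. i < m \<Longrightarrow> (\<Sum>j<d. \<bar>V i j\<bar> powr r) \<le> M powr r"
  shows "(\<Sum>j<d. (\<Sum>i<m. (V i j)^2) powr (r/2)) powr (1/r) \<le> real m powr (1/r) * M"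
proof -
  have column: "(\<Sum>i<m. (V i j)^2) powr (r/2) \<le> (\<Sum>i<m. \<bar>V i j\<bar> powr r)" for j
  proof -
    have "(\<Sum>i<m. ((V i j)^2) powr 1) powr (1/1) \<le> (\<Sum>i<m. ((V i j)^2) powr (r/2)) powr (1/(r/2))"
      using r by (intro lp_sum_antimono) auto
    then have "(\<Sum>i<m. (V i j)^2) \<le> (\<Sum>i<m. \<bar>V i j\<bar> powr r) powr (2/r)"
      by (simp add: power2_powr_half)
    then have "(\<Sum>i<m. (V i j)^2) powr (r/2) \<le> ((\<Sum>i<m. \<bar>V i j\<bar> powr r) powr (2/r)) powr (r/2)"
      using r by (intro powr_mono2) (auto intro: sum_nonneg)
    then show ?thesis
      using r by (simp add: powr_powr sum_nonneg)
  qed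
  have "(\<Sum>j<d. (\<Sum>i<m. (V i j)^2) powr (r/2)) \<le> (\<Sum>i<m. \<Sum>j<d. \<bar>V i j\<bar> powr r)"
    using sum_mono[of "{..<d}", OF column] by (simp add: sum.swap[of _ "{..<d}"])
  also have "\<dots> \<le> real m * M powr r"
    using rows sum_mono[of "{..<m}" "\<lambda>i. \<Sum>j<d. \<bar>V i j\<bar> powr r" "\<lambda>_. M powr r"] by simp
  finally have "(\<Sum>j<d. (\<Sum>i<m. (V i j)^2) powr (r/2)) powr (1/r) \<le> (real m * M powr r) powr (1/r)"
    using r by (intro powr_mono2) (auto intro: sum_nonneg)
  also have "\<dots> = real m powr (1/r) * M"
    using r M by (simp add: powr_mult powr_powr)
  finally show ?thesis .
qed

lemma lnorm_real_vector:
  assumes "\<And>j. Im (v j) = 0"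
  shows "lnorm d v (ereal r) = (\<Sum>j<d. \<bar>Re (v j)\<bar> powr r) powr (1/r)"
  using assms by (simp add: lnorm_ereal cmod_eq_Re)

lemma lnorm_signed_sum_real:
  assumes "\<And>i j. Im (f i j) = 0"
  shows "lnorm d (signed_sum m es f) (ereal r) = (\<Sum>j<d. \<bar>\<Sum>i<m. es!i * Re (f i j)\<bar> powr r) powr (1/r)"
  using assms by (simp add: lnorm_real_vector signed_sum_def Im_sum Re_sum)

lemma lp_sum_le_powr_of_lnorm_le:
  assumes "\<And>j. Im (v j) = 0" "lnorm d v (ereal r) \<le> M" "r > 0"
  shows "(\<Sum>j<d. \<bar>Re (v j)\<bar> powr r) \<le> M powr r" "M \<ge> 0"
proof -
  show "(\<Sum>j<d. \<bar>Re (v j)\<bar> powr r) \<le> M powr r"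
    using assms by (intro powr_le_of_root_le) (auto simp: lnorm_real_vector sum_nonneg)
  show "M \<ge> 0"
    using assms(2) by (simp add: lnorm_ereal order.trans[OF powr_ge_zero])
qed

lemma sign_mean_lnorm_le_khintchine:
  assumes f: "\<And>i j. Im (f i j) = 0" and m: "m > 0" and r: "r \<ge> 2" and k: "k \<ge> 1" "r \<le> 2 * real k"
    and M: "\<And>i. i < m \<Longrightarrow> lnorm d (f i) (ereal r) \<le> M"
  shows "sign_mean m (\<lambda>es. lnorm d (signed_sum m es f) (ereal r))
    \<le> dfact k powr (1 / (2 * real k)) * (sqrt (real m) * M)"
proof -
  have "sign_mean m (\<lambda>es. lnorm d (signed_sum m es f) (ereal r))
      \<le> dfact k powr (1 / (2 * real k)) * (\<Sum>j<d. (\<Sum>i<m. (Re (f i j))^2) powr (r/2)) powr (1/r)"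
    unfolding lnorm_signed_sum_real[OF f] using r k by (intro khintchine_lp) auto
  also have "\<dots> \<le> dfact k powr (1 / (2 * real k)) * (sqrt (real m) * M)"
    using m r lp_sum_le_powr_of_lnorm_le[OF f M] by (intro mult_left_mono mixed_norm_le_sqrt_card) auto
  finally show ?thesis .
qed

lemma sign_mean_lnorm_le_card_powr:
  assumes f: "\<And>i j. Im (f i j) = 0" and m: "m > 0" and r: "r \<ge> 1" "r \<le> 2"
    and M: "\<And>i. i < m \<Longrightarrow> lnorm d (f i) (ereal r) \<le> M"
  shows "sign_mean m (\<lambda>es. lnorm d (signed_sum m es f) (ereal r)) \<le> real m powr (1/r) * M"
proof -
  have "sign_mean m (\<lambda>es. lnorm d (signed_sum m es f) (ereal r))
      \<le> dfact 1 powr (1 / (2 * real 1)) * (\<Sum>j<d. (\<Sum>i<m. (Re (f i j))^2) powr (r/2)) powr (1/r)"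
    unfolding lnorm_signed_sum_real[OF f] using r by (intro khintchine_lp) auto
  also have "\<dots> \<le> real m powr (1/r) * M"
    using m r lp_sum_le_powr_of_lnorm_le[OF f M] by (simp add: mixed_norm_le_card_powr)
  finally show ?thesis .
qed

lemma sign_mean_lnorm_le_sqrt_exponent:
  assumes f: "\<And>i j. Im (f i j) = 0" and m: "m > 0" and r: "r \<ge> 2"
    and M: "\<And>i. i < m \<Longrightarrow> lnorm d (f i) (ereal r) \<le> M"
  shows "sign_mean m (\<lambda>es. lnorm d (signed_sum m es f) (ereal r)) \<le> sqrt r * (sqrt (real m) * M)"
proof -
  define k where "k = nat \<lceil>r / 2\<rceil>"
  have k: "real k = of_int \<lceil>r / 2\<rceil>"
    using r by (simp add: k_def)
  have k1: "k \<ge> 1" and rk: "r \<le> 2 * real k" and kr: "real k \<le> r"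
    using k r le_of_int_ceiling[of "r/2"] of_int_ceiling_le_add_one[of "r/2"] by linarith+
  have "sign_mean m (\<lambda>es. lnorm d (signed_sum m es f) (ereal r)) \<le> dfact k powr (1 / (2 * real k)) * (sqrt (real m) * M)"
    by (rule sign_mean_lnorm_le_khintchine[OF f m r k1 rk M])
  also have "\<dots> \<le> sqrt r * (sqrt (real m) * M)"
    using dfact_root_le_sqrt[OF k1 kr] lp_sum_le_powr_of_lnorm_le(2)[OF f M[OF m]] r
    by (intro mult_right_mono) auto
  finally show ?thesis .
qed

lemma lnorm_hconj_le_lnorm:
  assumes "d > 0" "p \<ge> 1" "s > 0" "p = 1 \<or> s \<le> p / (p - 1)"
  shows "lnorm d v (hconj p) \<le> lnorm d v (ereal s)"
proof (cases "p = 1")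
  case True
  then show ?thesis
    unfolding True hconj_one lnorm_infinity lnorm_ereal using assms
    by (intro Max_image_lessThan_le le_lp_sum) auto
next
  case False
  then have "p > 1"
    using assms by simp
  have "(\<Sum>i<d. cmod (v i) powr (p/(p-1))) powr (1/(p/(p-1))) \<le> (\<Sum>i<d. cmod (v i) powr s) powr (1/s)"
    using False assms by (intro lp_sum_antimono) auto
  then show ?thesis
    using \<open>p > 1\<close> by (simp only: lnorm_hconj_gt_one lnorm_ereal)
qed

lemma lnorm_le_card_powr_lnorm_hconj:
  assumes "p \<ge> 1" "s > 0"
  shows "lnorm d v (ereal s) \<le> real d powr (1/s) * lnorm d v (hconj p)"
  using lp_sum_le_card_powr[of "{..<d}" "\<lambda>j. cmod (v j)" "lnorm d v (hconj p)" s] assms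
  by (simp add: lnorm_ereal cmod_le_lnorm_hconj)

lemma dfact_mult_dim_root_le:
  assumes "n \<ge> 1"
  shows "dfact (4*n) powr (1 / (8 * real n)) * real (4^n) powr (1 / (8 * real n)) \<le> sqrt (8 * real n)"
proof -
  have "real (4^n) = (2::real) ^ (2 * n)"
    by (simp add: power_mult)
  also have "\<dots> \<le> 2 ^ (4 * n)"
    by (rule power_increasing) auto
  finally have dim: "real (4^n) \<le> 2 ^ (4 * n)" .
  have "dfact (4*n) * real (4^n) \<le> real (4*n) ^ (4*n) * 2 ^ (4*n)"
    using dfact_le_power[of "4*n"] dim dfact_pos[of "4*n"] by (intro mult_mono) auto
  also have "\<dots> = (8 * real n) ^ (4*n)"
    by (simp only: power_mult_distrib[symmetric] of_nat_mult) simp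
  finally have "(dfact (4*n) * real (4^n)) powr (1 / (8 * real n)) \<le> ((8 * real n) ^ (4*n)) powr (1 / (8 * real n))"
    using dfact_pos[of "4*n"] by (intro powr_mono2) auto
  also have "((8 * real n) ^ (4*n)) powr (1 / (8 * real n)) = (8 * real n) powr (real (4*n) * (1 / (8 * real n)))"
    using assms by (simp only: powr_realpow[symmetric] powr_powr)
  also have "real (4*n) * (1 / (8 * real n)) = 1/2"
    using assms by simp
  finally show ?thesis
    using dfact_pos[of "4*n"] by (simp add: powr_mult powr_half_sqrt real_sqrt_mult)
qed

text \<open>For large \<open>p*\<close> the dimension \<open>4^n\<close> is small compared with \<open>p*\<close>: passing to the \<open>\<ell>_{8n}\<close>
  norm costs only a factor \<open>(4^n) powr (1/(8n))\<close>, which the Khintchine constant absorbs.\<close>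

lemma sign_mean_lnorm_hconj_le_sqrt_qubits:
  assumes f: "\<And>i j. Im (f i j) = 0" and m: "m > 0" and n: "n \<ge> 1" and p: "p \<ge> 1"
    and large: "p = 1 \<or> p / (p - 1) \<ge> 8 * real n"
    and M: "\<And>i. i < m \<Longrightarrow> lnorm (4^n) (f i) (hconj p) \<le> M"
  shows "sign_mean m (\<lambda>es. lnorm (4^n) (signed_sum m es f) (hconj p)) \<le> sqrt (8 * real n) * (sqrt (real m) * M)"
proof -
  define k where "k = 4 * n"
  have s: "8 * real n = 2 * real k" "8 * real n \<ge> 2"
    using n by (simp_all add: k_def)
  have M0: "M \<ge> 0"
    using M[OF m] lnorm_nonneg[of "4^n"] by (meson order.trans zero_less_numeral zero_less_power)
  have "sign_mean m (\<lambda>es. lnorm (4^n) (signed_sum m es f) (hconj p))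
      \<le> sign_mean m (\<lambda>es. lnorm (4^n) (signed_sum m es f) (ereal (8 * real n)))"
    using p large s by (intro sign_mean_mono lnorm_hconj_le_lnorm) auto
  also have "\<dots> \<le> dfact k powr (1 / (2 * real k)) * (sqrt (real m) * (real (4^n) powr (1 / (8 * real n)) * M))"
  proof (rule sign_mean_lnorm_le_khintchine[OF f m s(2)])
    fix i
    assume "i < m"
    then show "lnorm (4^n) (f i) (ereal (8 * real n)) \<le> real (4^n) powr (1 / (8 * real n)) * M"
      using lnorm_le_card_powr_lnorm_hconj[OF p, of "8 * real n" "4^n" "f i"] M n
      by (auto elim!: order.trans intro!: mult_left_mono)
  qed (use n s in \<open>auto simp: k_def\<close>)
  also have "\<dots> = (dfact k powr (1 / (8 * real n)) * real (4^n) powr (1 / (8 * real n))) * (sqrt (real m) * M)"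
    unfolding s(1)[symmetric] by (simp add: mult_ac)
  also have "\<dots> \<le> sqrt (8 * real n) * (sqrt (real m) * M)"
    using dfact_mult_dim_root_le[OF n] M0 by (intro mult_right_mono) (auto simp: k_def)
  finally show ?thesis .
qed

lemma sign_mean_lnorm_hconj_le_small_p:
  assumes f: "\<And>i j. Im (f i j) = 0" and m: "m > 0" and n: "n \<ge> 1" and p: "1 \<le> p" "p \<le> 2"
    and M: "\<And>i. i < m \<Longrightarrow> lnorm (4^n) (f i) (hconj p) \<le> M"
  shows "sign_mean m (\<lambda>es. lnorm (4^n) (signed_sum m es f) (hconj p))
    \<le> sqrt (real_of_ereal (min (hconj p) (ereal (8 * real n)))) * (sqrt (real m) * M)"
proof (cases "p = 1 \<or> p / (p - 1) \<ge> 8 * real n")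
  case True
  then have "real_of_ereal (min (hconj p) (ereal (8 * real n))) = 8 * real n"
    using p by (cases "p = 1") (auto simp: hconj_one hconj_gt_one min_def)
  then show ?thesis
    using sign_mean_lnorm_hconj_le_sqrt_qubits[OF f m n p(1) True M] by simp
next
  case False
  define r where "r = p / (p - 1)"
  have "p > 1" "r < 8 * real n" "r \<ge> 2"
    using False p by (auto simp: r_def field_simps)
  then have "hconj p = ereal r" "real_of_ereal (min (hconj p) (ereal (8 * real n))) = r"
    by (auto simp: hconj_gt_one r_def min_def)
  then show ?thesis
    using sign_mean_lnorm_le_sqrt_exponent[OF f m \<open>r \<ge> 2\<close>] M by simp
qed

lemma sign_mean_lnorm_hconj_le_large_p:
  assumes f: "\<And>i j. Im (f i j) = 0" and m: "m > 0" and p: "p > 2"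
    and M: "\<And>i. i < m \<Longrightarrow> lnorm d (f i) (hconj p) \<le> M"
  shows "sign_mean m (\<lambda>es. lnorm d (signed_sum m es f) (hconj p)) \<le> real m powr (1 - 1/p) * M"
proof -
  define r where "r = p / (p - 1)"
  have "r \<ge> 1" "r \<le> 2" "1/r = 1 - 1/p" "hconj p = ereal r"
    using p by (auto simp: r_def field_simps hconj_gt_one)
  then show ?thesis
    using sign_mean_lnorm_le_card_powr[OF f m, of r] M by simp
qed

section \<open>Rademacher complexity of norm-bounded circuits\<close>

lemma rademacher_le_sign_mean:
  assumes xs: "xs \<noteq> []" and B: "B \<ge> 0" and N: "\<And>es. N es \<ge> 0"
    and bound: "\<And>es g. es \<in> signs (length xs) \<Longrightarrow> g \<in> G \<Longrightarrow>
      \<bar>\<Sum>i<length xs. es ! i * g (xs ! i)\<bar> \<le> B * N es"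
  shows "rademacher xs G \<le> B / real (length xs) * sign_mean (length xs) N"
proof -
  let ?m = "length xs"
  have sup: "Sup (insert 0 {\<bar>\<Sum>i<?m. es ! i * g (xs ! i)\<bar> | g. g \<in> G}) \<le> B * N es"
    if "es \<in> signs ?m" for es
    using bound[OF that] B N[of es] by (intro cSup_least) auto
  have "rademacher xs G = (\<Sum>es\<in>signs ?m. (1 / real ?m) *
      Sup (insert 0 {\<bar>\<Sum>i<?m. es ! i * g (xs ! i)\<bar> | g. g \<in> G})) / card (signs ?m)"
    by (simp add: rademacher_def signs_def Let_def)
  also have "\<dots> \<le> (\<Sum>es\<in>signs ?m. (1 / real ?m) * (B * N es)) / card (signs ?m)"
    using sup by (intro divide_right_mono sum_mono mult_left_mono) auto
  also have "\<dots> = B / real ?m * sign_mean ?m N"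
    by (simp add: sign_mean_def sum_distrib_left)
  finally show ?thesis .
qed

lemma rademacher_circuits_le:
  assumes xs: "xs \<noteq> []" and \<mu>: "\<mu> \<ge> 0" and p: "p \<ge> 1" and q: "q > 0"
    and pure: "\<forall>x. pure_state (ns ! 0) (\<rho> x)" and H: "hermitian (2 ^ (ns ! l)) H"
  shows "rademacher xs ((\<lambda>Cs. model_fun \<rho> H Cs) ` {Cs \<in> circuits l ns. mu_pq p q ns Cs \<le> \<mu>})
    \<le> \<mu> * 4 powr ((\<Sum>i\<in>{1..l}. real (ns!i)) * max (1 - 1/p) (ereal_recip q))
        * lnorm (4^(ns!l)) (alpha_vec (ns!l) H) (ereal p) / real (length xs)
      * sign_mean (length xs)
          (\<lambda>es. lnorm (4^(ns!0)) (signed_sum (length xs) es (\<lambda>i. fI_vec (ns!0) (\<rho> (xs!i)))) (hconj p))"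
proof (rule rademacher_le_sign_mean[OF xs])
  show "0 \<le> \<mu> * 4 powr ((\<Sum>i\<in>{1..l}. real (ns!i)) * max (1 - 1/p) (ereal_recip q))
      * lnorm (4^(ns!l)) (alpha_vec (ns!l) H) (ereal p)"
    using \<mu> by (simp add: lnorm_nonneg)
qed (use abs_signed_sum_model_fun_le[OF _ p q _ pure H] in \<open>auto simp: lnorm_nonneg\<close>)

lemma K_p_nonneg: "xs \<noteq> [] \<Longrightarrow> K_p p n0 nl \<rho> xs H \<ge> 0"
  by (auto simp: K_p_def lnorm_nonneg Max_ge_iff ex_in_conv intro!: mult_nonneg_nonneg)

lemma rademacher_circuits_le_K_p:
  assumes xs: "xs \<noteq> []" and \<mu>: "\<mu> \<ge> 0" and p: "p \<ge> 1" and q: "q > 0"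
    and pure: "\<forall>x. pure_state (ns ! 0) (\<rho> x)" and H: "hermitian (2 ^ (ns ! l)) H" and B: "B \<ge> 0"
    and sign_mean_le: "\<And>f M. (\<And>i j. Im (f i j) = 0) \<Longrightarrow>
      (\<And>i. i < length xs \<Longrightarrow> lnorm (4^(ns!0)) (f i) (hconj p) \<le> M) \<Longrightarrow>
      sign_mean (length xs) (\<lambda>es. lnorm (4^(ns!0)) (signed_sum (length xs) es f) (hconj p)) \<le> B * M"
  shows "rademacher xs ((\<lambda>Cs. model_fun \<rho> H Cs) ` {Cs \<in> circuits l ns. mu_pq p q ns Cs \<le> \<mu>})
    \<le> \<mu> * 4 powr ((\<Sum>i\<in>{1..l}. real (ns!i)) * max (1 - 1/p) (ereal_recip q)) * B / real (length xs)
      * K_p p (ns ! 0) (ns ! l) \<rho> xs H"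
proof -
  define f where "f i = fI_vec (ns!0) (\<rho> (xs!i))" for i
  define M where "M = Max ((\<lambda>x. lnorm (4^(ns!0)) (fI_vec (ns!0) (\<rho> x)) (hconj p)) ` set xs)"
  define C where "C = \<mu> * 4 powr ((\<Sum>i\<in>{1..l}. real (ns!i)) * max (1 - 1/p) (ereal_recip q))
    * lnorm (4^(ns!l)) (alpha_vec (ns!l) H) (ereal p)"
  have "C \<ge> 0"
    using \<mu> by (simp add: C_def lnorm_nonneg)
  have signs: "sign_mean (length xs) (\<lambda>es. lnorm (4^(ns!0)) (signed_sum (length xs) es f) (hconj p)) \<le> B * M"
  proof (rule sign_mean_le)
    show "Im (f i j) = 0" for i j
      using pure by (simp add: f_def Im_fI_vec)
    show "lnorm (4^(ns!0)) (f i) (hconj p) \<le> M" if "i < length xs" for i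
      using that by (auto simp: M_def f_def intro!: Max_ge)
  qed
  have "rademacher xs ((\<lambda>Cs. model_fun \<rho> H Cs) ` {Cs \<in> circuits l ns. mu_pq p q ns Cs \<le> \<mu>})
      \<le> C / real (length xs) * sign_mean (length xs) (\<lambda>es. lnorm (4^(ns!0)) (signed_sum (length xs) es f) (hconj p))"
    unfolding C_def f_def[abs_def] by (rule rademacher_circuits_le[OF xs \<mu> p q pure H])
  also have "\<dots> \<le> C / real (length xs) * (B * M)"
    using signs \<open>C \<ge> 0\<close> by (intro mult_left_mono) auto
  finally show ?thesis
    by (simp add: C_def K_p_def M_def mult_ac)
qed

lemma rademacher_circuits_le_small_p:
  assumes xs: "xs \<noteq> []" and \<mu>: "\<mu> \<ge> 0" and p: "1 \<le> p" "p \<le> 2" and q: "q > 0" and n0: "ns ! 0 \<ge> 1"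
    and pure: "\<forall>x. pure_state (ns ! 0) (\<rho> x)" and H: "hermitian (2 ^ (ns ! l)) H"
  shows "rademacher xs ((\<lambda>Cs. model_fun \<rho> H Cs) ` {Cs \<in> circuits l ns. mu_pq p q ns Cs \<le> \<mu>})
    \<le> \<mu> * 4 powr ((\<Sum>i\<in>{1..l}. real (ns!i)) * max (1 - 1/p) (ereal_recip q))
      * sqrt (real_of_ereal (min (hconj p) (ereal (8 * real (ns ! 0))))) / sqrt (real (length xs))
      * K_p p (ns ! 0) (ns ! l) \<rho> xs H"
proof -
  define m where "m = length xs"
  define E where "E = \<mu> * 4 powr ((\<Sum>i\<in>{1..l}. real (ns!i)) * max (1 - 1/p) (ereal_recip q))"
  define c where "c = sqrt (real_of_ereal (min (hconj p) (ereal (8 * real (ns ! 0)))))"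
  define K where "K = K_p p (ns ! 0) (ns ! l) \<rho> xs H"
  have m: "m > 0"
    using xs by (simp add: m_def)
  have "c \<ge> 0"
    using p by (cases "p = 1") (auto simp: c_def hconj_one hconj_gt_one min_def)
  have "rademacher xs ((\<lambda>Cs. model_fun \<rho> H Cs) ` {Cs \<in> circuits l ns. mu_pq p q ns Cs \<le> \<mu>})
      \<le> E * (c * sqrt m) / m * K"
    unfolding E_def K_def m_def using sign_mean_lnorm_hconj_le_small_p[OF _ _ n0 p] \<open>c \<ge> 0\<close> xs
    by (intro rademacher_circuits_le_K_p[OF xs \<mu> p(1) q pure H]) (auto simp: c_def mult_ac)
  also have "\<dots> = E * c / sqrt m * K"
    using m by (simp add: field_simps real_sqrt_mult[symmetric])
  finally show ?thesis
    by (simp add: E_def c_def K_def m_def)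
qed

lemma rademacher_circuits_le_large_p:
  assumes xs: "xs \<noteq> []" and \<mu>: "\<mu> \<ge> 0" and p: "2 < p" and q: "q > 0"
    and pure: "\<forall>x. pure_state (ns ! 0) (\<rho> x)" and H: "hermitian (2 ^ (ns ! l)) H"
  shows "rademacher xs ((\<lambda>Cs. model_fun \<rho> H Cs) ` {Cs \<in> circuits l ns. mu_pq p q ns Cs \<le> \<mu>})
    \<le> \<mu> * 4 powr ((\<Sum>i\<in>{1..l}. real (ns!i)) * max (1 - 1/p) (ereal_recip q))
      * sqrt (real_of_ereal (hconj p)) / real (length xs) powr (1/p) * K_p p (ns ! 0) (ns ! l) \<rho> xs H"
proof -
  define m where "m = length xs"
  define E where "E = \<mu> * 4 powr ((\<Sum>i\<in>{1..l}. real (ns!i)) * max (1 - 1/p) (ereal_recip q))"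
  define K where "K = K_p p (ns ! 0) (ns ! l) \<rho> xs H"
  have m: "m > 0"
    using xs by (simp add: m_def)
  have "E \<ge> 0" "K \<ge> 0"
    using \<mu> xs by (simp_all add: E_def K_def K_p_nonneg)
  have "rademacher xs ((\<lambda>Cs. model_fun \<rho> H Cs) ` {Cs \<in> circuits l ns. mu_pq p q ns Cs \<le> \<mu>})
      \<le> E * m powr (1 - 1/p) / m * K"
    unfolding E_def K_def m_def using sign_mean_lnorm_hconj_le_large_p[OF _ _ p] xs
    by (intro rademacher_circuits_le_K_p[OF xs \<mu> _ q pure H]) (use p in auto)
  also have "\<dots> = 1 * (E / m powr (1/p) * K)"
    using m by (simp add: powr_diff)
  also have "\<dots> \<le> sqrt (real_of_ereal (hconj p)) * (E / m powr (1/p) * K)"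
    using p \<open>E \<ge> 0\<close> \<open>K \<ge> 0\<close> by (intro mult_right_mono) (auto simp: hconj_gt_one)
  finally show ?thesis
    by (simp add: E_def K_def m_def mult_ac)
qed

theorem mainTheorem5:
  fixes l :: nat and ns :: "nat list" and \<mu> p :: real and q :: ereal
    and \<rho> :: "'x \<Rightarrow> complex mat" and H :: "complex mat" and xs :: "'x list"
  assumes "l \<ge> 1" and "length ns = l + 1" and "\<forall>i\<le>l. ns ! i \<ge> 1"
    and "\<mu> > 0" and "1 \<le> p" and "0 < q"
    and "\<forall>x. pure_state (ns ! 0) (\<rho> x)"
    and "hermitian (2 ^ (ns ! l)) H"
    and "xs \<noteq> []"
  shows
    "let m = length xs;
         G = (\<lambda>Cs. model_fun \<rho> H Cs) ` {Cs \<in> circuits l ns. mu_pq p q ns Cs \<le> \<mu>};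
         E = 4 powr ((\<Sum>i\<in>{1..l}. real (ns ! i)) * max (1 - 1 / p) (ereal_recip q));
         K = K_p p (ns ! 0) (ns ! l) \<rho> xs H
     in (p \<le> 2 \<longrightarrow> rademacher xs G \<le>
           \<mu> * E * sqrt (real_of_ereal (min (hconj p) (ereal (8 * real (ns ! 0))))) / sqrt (real m) * K)
      \<and> (2 < p \<longrightarrow> rademacher xs G \<le>
           \<mu> * E * sqrt (real_of_ereal (hconj p)) / (real m powr (1 / p)) * K)"
proof -
  have "ns ! 0 \<ge> 1" "\<mu> \<ge> 0"
    using assms(3,4) by auto
  then show ?thesis
    unfolding Let_def
    using rademacher_circuits_le_small_p[OF assms(9) _ assms(5) _ assms(6) _ assms(7,8)]
      rademacher_circuits_le_large_p[OF assms(9) _ _ assms(6-8)]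
    by blast
qed

end
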